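(* Assume that $\varphi$ satisfies Conditions (C1), (C2), (C3), (C4) described in the context and that $\Omega$ is bounded, connected and has a Lipschitz boundary. Then each bounded linear functional $\phi\in(\mathcal L(\Omega))^*$ can be represented in the form $$\phi(u)=\phi_0(\mathbf U)+k\,\langle u\rangle_\Omega,\qquad u\in\mathcal L(\Omega),$$ where $\mathbf U\in\Lambda(\Omega)$ is the coset containing $u$, $\phi_0\in(\Lambda(\Omega))^*$ is some functional, $k\in\mathbb C$ is some constant, and $\langle u\rangle_\Omega:=\frac{1}{\operatorname{mes}\Omega}\int_\Omega u\,dx$. Conversely, each pair $(\phi_0,k)$ with $\phi_0\in(\Lambda(\Omega))^*$, $k\in\mathbb C$, generates a bounded linear functional on $\mathcal L(\Omega)$ by this formula.
   Context: Let $d\ge 1$ and let $\Omega\subseteq\mathbb R^d$ be a domain. Functions are complex-valued. Let $a\in L_1(\mathbb R^d)$, $a\ge 0$, and suppose there is a non-empty ball $B_0$ centered at $0$ with $a(z)\ge c_0>0$ for a.e. $z\in B_0$. A real function $r$ on $[0,\infty)$ is almost increasing (resp. almost decreasing) with constant $\beta\ge1$ if $r(s)\le\beta r(t)$ (resp. $\beta r(s)\ge r(t)$) for all $0\le s\le t$. Let $\varphi:[0,\infty)\times\Omega\times\Omega\to[0,\infty)$. Conditions: (C1) for each $u\in L_{1,loc}(\Omega)$ the function $(x,y)\mapsto\varphi(|u(x)-u(y)|,x,y)$ is measurable on $\Omega\times\Omega$; (C2) for every $\varepsilon>0$ there is $\delta\in(0,1)$ such that $\varphi(\frac{s+t}{2},x,y)\le(1-\delta)\frac{\varphi(s,x,y)+\varphi(t,x,y)}{2}$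 for a.e. $(x,y)$ and all $s,t>0$ with $|s-t|\ge\varepsilon\max\{s,t\}$; (C3) there are constants $1<p_-\le p_+$ and $\beta\ge1$ such that for a.e. $(x,y)$ the function $t\mapsto\varphi(t,x,y)/t^{p_-}$ is almost increasing with constant $\beta$ and $t\mapsto\varphi(t,x,y)/t^{p_+}$ is almost decreasing with constant $\beta$; (C4) for a.e. $(x,y)$: $c_1^{-1}\le\varphi(1,x,y)\le c_1$ with a constant $c_1>0$, $\varphi(0,x,y)=0$, and $\varphi(t,x,y)>0$ for $t>0$. Define for $u\in L_{1,loc}(\Omega)$: $F(u)=\int_{\Omega\times\Omega}\varphi(|u(x)-u(y)|,x,y)\,a(x-y)\,dx\,dy\in[0,+\infty]$, $|u|_{p,\Omega}=\inf\{\lambda>0: F(u/\lambda)\le1\}$, $f(u)=|u|_{p,\Omega}+\|u\|_{L_{p_-}(\Omega)}$, $\mathcal L(\Omega)=\{u\in L_{p_-,loc}(\Omega): f(u)<+\infty\}$ normed by $f$. On $L_{1,loc}(\Omega)$ let $u\sim v$ iff $u-v$ is a.e. constant; $\Lambda(\Omega)$ is the space of cosets $\mathbf U$ with $|u|_{p,\Omega}<\infty$ for $u\in\mathbf U$, normed by $|\mathbf U|_{p,\Omega}:=|u|_{p,\Omega}$. *)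

theory Defs
  imports "HOL-Analysis.Analysis"
begin

text \<open>Ambient space: a Euclidean space 'a (playing the role of R^d, d = DIM('a) >= 1).\<close>

text \<open>Domain with Lipschitz boundary: near every boundary point, after choosing a unit
  direction e (i.e. a rotation of coordinates), Omega is the part of a ball lying strictly
  above the graph of a Lipschitz function defined on the hyperplane orthogonal to e.\<close>
definition lipschitz_boundary :: "'a::euclidean_space set \<Rightarrow> bool" where
  "lipschitz_boundary \<Omega> \<longleftrightarrow>
     (\<forall>x0\<in>frontier \<Omega>. \<exists>r>0. \<exists>e::'a. \<exists>g::'a \<Rightarrow> real. \<exists>L.
        norm e = 1 \<and> L-lipschitz_on {y. y \<bullet> e = 0} g \<and>
        \<Omega> \<inter> ball x0 r = {x \<in> ball x0 r. g (x - (x \<bullet> e) *\<^sub>R e) < x \<bullet> e})"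

definition almost_increasing :: "real \<Rightarrow> (real \<Rightarrow> real) \<Rightarrow> bool" where
  "almost_increasing \<beta> r \<longleftrightarrow> \<beta> \<ge> 1 \<and> (\<forall>s t. 0 < s \<longrightarrow> s \<le> t \<longrightarrow> r s \<le> \<beta> * r t)"

definition almost_decreasing :: "real \<Rightarrow> (real \<Rightarrow> real) \<Rightarrow> bool" where
  "almost_decreasing \<beta> r \<longleftrightarrow> \<beta> \<ge> 1 \<and> (\<forall>s t. 0 < s \<longrightarrow> s \<le> t \<longrightarrow> \<beta> * r s \<ge> r t)"

definition L1loc :: "'a::euclidean_space set \<Rightarrow> ('a \<Rightarrow> complex) set" where
  "L1loc \<Omega> = {u. set_borel_measurable lebesgue \<Omega> u \<and>
      (\<forall>K. compact K \<and> K \<subseteq> \<Omega> \<longrightarrow> set_integrable lebesgue K u)}"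

definition Lploc :: "real \<Rightarrow> 'a::euclidean_space set \<Rightarrow> ('a \<Rightarrow> complex) set" where
  "Lploc p \<Omega> = {u. set_borel_measurable lebesgue \<Omega> u \<and>
      (\<forall>K. compact K \<and> K \<subseteq> \<Omega> \<longrightarrow>
          (\<integral>\<^sup>+x\<in>K. ennreal (cmod (u x) powr p) \<partial>lebesgue) < \<infinity>)}"

definition cond_C1 :: "(real \<Rightarrow> 'a \<Rightarrow> 'a \<Rightarrow> real) \<Rightarrow> 'a::euclidean_space set \<Rightarrow> bool" where
  "cond_C1 \<phi> \<Omega> \<longleftrightarrow> (\<forall>u\<in>L1loc \<Omega>.
     set_borel_measurable lebesgue (\<Omega> \<times> \<Omega>)
       (\<lambda>z. \<phi> (cmod (u (fst z) - u (snd z))) (fst z) (snd z)))"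

definition cond_C2 :: "(real \<Rightarrow> 'a \<Rightarrow> 'a \<Rightarrow> real) \<Rightarrow> 'a::euclidean_space set \<Rightarrow> bool" where
  "cond_C2 \<phi> \<Omega> \<longleftrightarrow> (\<forall>\<epsilon>>0. \<exists>\<delta>. 0 < \<delta> \<and> \<delta> < 1 \<and>
     (AE z in lebesgue. z \<in> \<Omega> \<times> \<Omega> \<longrightarrow>
        (\<forall>s t. 0 < s \<longrightarrow> 0 < t \<longrightarrow> \<bar>s - t\<bar> \<ge> \<epsilon> * max s t \<longrightarrow>
           \<phi> ((s + t) / 2) (fst z) (snd z)
             \<le> (1 - \<delta>) * ((\<phi> s (fst z) (snd z) + \<phi> t (fst z) (snd z)) / 2))))"

definition cond_C3 :: "(real \<Rightarrow> 'a \<Rightarrow> 'a \<Rightarrow> real) \<Rightarrow> 'a::euclidean_space set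
     \<Rightarrow> real \<Rightarrow> real \<Rightarrow> real \<Rightarrow> bool" where
  "cond_C3 \<phi> \<Omega> pm pp \<beta> \<longleftrightarrow> 1 < pm \<and> pm \<le> pp \<and> \<beta> \<ge> 1 \<and>
     (AE z in lebesgue. z \<in> \<Omega> \<times> \<Omega> \<longrightarrow>
        almost_increasing \<beta> (\<lambda>t. \<phi> t (fst z) (snd z) / t powr pm) \<and>
        almost_decreasing \<beta> (\<lambda>t. \<phi> t (fst z) (snd z) / t powr pp))"

definition cond_C4 :: "(real \<Rightarrow> 'a \<Rightarrow> 'a \<Rightarrow> real) \<Rightarrow> 'a::euclidean_space set \<Rightarrow> bool" where
  "cond_C4 \<phi> \<Omega> \<longleftrightarrow> (\<exists>c1>0.
     (AE z in lebesgue. z \<in> \<Omega> \<times> \<Omega> \<longrightarrow>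
        inverse c1 \<le> \<phi> 1 (fst z) (snd z) \<and> \<phi> 1 (fst z) (snd z) \<le> c1 \<and>
        \<phi> 0 (fst z) (snd z) = 0 \<and> (\<forall>t>0. \<phi> t (fst z) (snd z) > 0)))"

definition Fmod :: "(real \<Rightarrow> 'a \<Rightarrow> 'a \<Rightarrow> real) \<Rightarrow> ('a::euclidean_space \<Rightarrow> real) \<Rightarrow> 'a set
     \<Rightarrow> ('a \<Rightarrow> complex) \<Rightarrow> ennreal" where
  "Fmod \<phi> a \<Omega> u = (\<integral>\<^sup>+z\<in>\<Omega> \<times> \<Omega>.
      ennreal (\<phi> (cmod (u (fst z) - u (snd z))) (fst z) (snd z) * a (fst z - snd z)) \<partial>lebesgue)"

text \<open>|u|_{p,Omega} = inf {lambda > 0. F(u/lambda) <= 1}, with inf of the empty set = +infinity.\<close>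
definition pnorm :: "(real \<Rightarrow> 'a \<Rightarrow> 'a \<Rightarrow> real) \<Rightarrow> ('a::euclidean_space \<Rightarrow> real) \<Rightarrow> 'a set
     \<Rightarrow> ('a \<Rightarrow> complex) \<Rightarrow> ereal" where
  "pnorm \<phi> a \<Omega> u = Inf {ereal l | l. l > 0 \<and> Fmod \<phi> a \<Omega> (\<lambda>x. u x / complex_of_real l) \<le> 1}"

text \<open>The integral of |u|^p over Omega, and the L_p(Omega) norm (meaningful when finite).\<close>
definition Lp_integral :: "real \<Rightarrow> 'a::euclidean_space set \<Rightarrow> ('a \<Rightarrow> complex) \<Rightarrow> ennreal" where
  "Lp_integral p \<Omega> u = (\<integral>\<^sup>+x\<in>\<Omega>. ennreal (cmod (u x) powr p) \<partial>lebesgue)"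

definition Lp_norm :: "real \<Rightarrow> 'a::euclidean_space set \<Rightarrow> ('a \<Rightarrow> complex) \<Rightarrow> real" where
  "Lp_norm p \<Omega> u = enn2real (Lp_integral p \<Omega> u) powr (1 / p)"

definition Lspace :: "(real \<Rightarrow> 'a \<Rightarrow> 'a \<Rightarrow> real) \<Rightarrow> ('a::euclidean_space \<Rightarrow> real) \<Rightarrow> 'a set
     \<Rightarrow> real \<Rightarrow> ('a \<Rightarrow> complex) set" where
  "Lspace \<phi> a \<Omega> pm = {u. u \<in> Lploc pm \<Omega> \<and> pnorm \<phi> a \<Omega> u < \<infinity> \<and> Lp_integral pm \<Omega> u < \<infinity>}"

definition fnorm :: "(real \<Rightarrow> 'a \<Rightarrow> 'a \<Rightarrow> real) \<Rightarrow> ('a::euclidean_space \<Rightarrow> real) \<Rightarrow> 'a set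
     \<Rightarrow> real \<Rightarrow> ('a \<Rightarrow> complex) \<Rightarrow> real" where
  "fnorm \<phi> a \<Omega> pm u = real_of_ereal (pnorm \<phi> a \<Omega> u) + Lp_norm pm \<Omega> u"

definition coset_of :: "'a::euclidean_space set \<Rightarrow> ('a \<Rightarrow> complex) \<Rightarrow> ('a \<Rightarrow> complex) set" where
  "coset_of \<Omega> u = {v \<in> L1loc \<Omega>. \<exists>c. AE x in lebesgue. x \<in> \<Omega> \<longrightarrow> v x - u x = c}"

definition Lambda_base :: "(real \<Rightarrow> 'a \<Rightarrow> 'a \<Rightarrow> real) \<Rightarrow> ('a::euclidean_space \<Rightarrow> real) \<Rightarrow> 'a set
     \<Rightarrow> ('a \<Rightarrow> complex) set" where
  "Lambda_base \<phi> a \<Omega> = {u \<in> L1loc \<Omega>. pnorm \<phi> a \<Omega> u < \<infinity>}"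

definition Lambda_space :: "(real \<Rightarrow> 'a \<Rightarrow> 'a \<Rightarrow> real) \<Rightarrow> ('a::euclidean_space \<Rightarrow> real) \<Rightarrow> 'a set
     \<Rightarrow> ('a \<Rightarrow> complex) set set" where
  "Lambda_space \<phi> a \<Omega> = coset_of \<Omega> ` Lambda_base \<phi> a \<Omega>"

definition dual_L :: "(real \<Rightarrow> 'a \<Rightarrow> 'a \<Rightarrow> real) \<Rightarrow> ('a::euclidean_space \<Rightarrow> real) \<Rightarrow> 'a set
     \<Rightarrow> real \<Rightarrow> (('a \<Rightarrow> complex) \<Rightarrow> complex) set" where
  "dual_L \<phi> a \<Omega> pm = {\<psi>.
     (\<forall>u v. u \<in> Lspace \<phi> a \<Omega> pm \<longrightarrow> v \<in> Lspace \<phi> a \<Omega> pm \<longrightarrow> (\<lambda>x. u x + v x) \<in> Lspace \<phi> a \<Omega> pm \<longrightarrow>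
        \<psi> (\<lambda>x. u x + v x) = \<psi> u + \<psi> v) \<and>
     (\<forall>c u. u \<in> Lspace \<phi> a \<Omega> pm \<longrightarrow> (\<lambda>x. c * u x) \<in> Lspace \<phi> a \<Omega> pm \<longrightarrow>
        \<psi> (\<lambda>x. c * u x) = c * \<psi> u) \<and>
     (\<exists>C. \<forall>u \<in> Lspace \<phi> a \<Omega> pm. cmod (\<psi> u) \<le> C * fnorm \<phi> a \<Omega> pm u)}"

text \<open>Bounded linear functionals on Lambda(Omega) (normed by |U|_{p,Omega} := |u|_{p,Omega}, u in U).
  Vector operations on cosets are those induced by representatives.\<close>
definition dual_Lambda :: "(real \<Rightarrow> 'a \<Rightarrow> 'a \<Rightarrow> real) \<Rightarrow> ('a::euclidean_space \<Rightarrow> real) \<Rightarrow> 'a set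
     \<Rightarrow> (('a \<Rightarrow> complex) set \<Rightarrow> complex) set" where
  "dual_Lambda \<phi> a \<Omega> = {\<psi>.
     (\<forall>u v. u \<in> Lambda_base \<phi> a \<Omega> \<longrightarrow> v \<in> Lambda_base \<phi> a \<Omega> \<longrightarrow> (\<lambda>x. u x + v x) \<in> Lambda_base \<phi> a \<Omega> \<longrightarrow>
        \<psi> (coset_of \<Omega> (\<lambda>x. u x + v x)) = \<psi> (coset_of \<Omega> u) + \<psi> (coset_of \<Omega> v)) \<and>
     (\<forall>c u. u \<in> Lambda_base \<phi> a \<Omega> \<longrightarrow> (\<lambda>x. c * u x) \<in> Lambda_base \<phi> a \<Omega> \<longrightarrow>
        \<psi> (coset_of \<Omega> (\<lambda>x. c * u x)) = c * \<psi> (coset_of \<Omega> u)) \<and>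
     (\<exists>C. \<forall>u \<in> Lambda_base \<phi> a \<Omega>. cmod (\<psi> (coset_of \<Omega> u)) \<le> C * real_of_ereal (pnorm \<phi> a \<Omega> u))}"

definition mean_val :: "'a::euclidean_space set \<Rightarrow> ('a \<Rightarrow> complex) \<Rightarrow> complex" where
  "mean_val \<Omega> u = complex_of_real (1 / measure lebesgue \<Omega>) * (LINT x:\<Omega>|lebesgue. u x)"

end

(*
  L(\<Omega>) and \<Lambda>(\<Omega>) have the same elements, and the Poincare inequality
  \<parallel>u - \<langle>u\<rangle>\<parallel>_{L_p-} \<le> C |u|_{p,\<Omega>} holds. Hence \<phi> u = \<phi> (u - \<langle>u\<rangle>) + \<langle>u\<rangle> \<phi> 1, and
  U \<mapsto> \<phi> (u - \<langle>u\<rangle>) is a well defined bounded functional on \<Lambda>(\<Omega>). The converse only needs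
  |\<langle>u\<rangle>| \<le> C \<parallel>u\<parallel>_{L_p-}.

  For the Poincare inequality, (C3) and (C4) give t^p- \<le> K \<phi>(t, x, y) for t \<ge> 1, so when
  F(w) \<le> 1 the integral of |w x - w y|^p- over the pairs in \<Omega> closer than \<rho> is bounded
  (a \<ge> c0 on the ball of radius \<rho>). Covering \<Omega> by finitely many pieces of diameter less than
  \<rho>/2 and chaining overlapping ones, which connectedness allows, extends the bound to all of
  \<Omega> \<times> \<Omega>; a suitable x then bounds \<integral> |w - w x|^p-. Rescaling by the admissible \<lambda> in the
  definition of |u|_{p,\<Omega>} gives the inequality.

  Only (C1), (C3), (C4), the lower bound for a near 0, boundedness and connectedness of \<Omega> are
  used.
*)
theory Submission
  imports Defs
begin

section \<open>Lebesgue measure\<close>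

lemma nn_integral_lebesgue_pair:
  fixes f :: "'a::euclidean_space \<times> 'b::euclidean_space \<Rightarrow> ennreal"
  assumes "f \<in> borel_measurable borel"
  shows "(\<integral>\<^sup>+z. f z \<partial>lebesgue) = (\<integral>\<^sup>+x. \<integral>\<^sup>+y. f (x, y) \<partial>lborel \<partial>lborel)"
proof -
  have "(\<integral>\<^sup>+z. f z \<partial>lebesgue) = (\<integral>\<^sup>+z. f z \<partial>(lborel \<Otimes>\<^sub>M lborel))"
    by (simp add: nn_integral_completion lborel_prod)
  also have "\<dots> = (\<integral>\<^sup>+x. \<integral>\<^sup>+y. f (x, y) \<partial>lborel \<partial>lborel)"
    using assms by (intro lborel.nn_integral_fst[symmetric]) (simp add: lborel_prod)
  finally show ?thesis .
qed

lemma AE_lebesgue_pair_fst: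
  assumes "AE x in (lebesgue :: 'a::euclidean_space measure). P x"
  shows "AE z in (lebesgue :: ('a \<times> 'b::euclidean_space) measure). P (fst z)"
proof -
  obtain N where N: "N \<in> null_sets lborel" "{x. \<not> P x} \<subseteq> N"
    using assms by (auto simp: eventually_ae_filter null_sets_completion_iff2)
  have "N \<times> (UNIV :: 'b set) \<in> null_sets (lborel \<Otimes>\<^sub>M lborel)"
    using N by (intro lborel.times_in_null_sets1) simp_all
  then have "N \<times> UNIV \<in> null_sets (lebesgue :: ('a \<times> 'b) measure)"
    by (simp add: lborel_prod null_sets_completionI)
  then show ?thesis
    by (rule AE_I') (use N in auto)
qed

lemma AE_lebesgue_pair_snd:
  assumes "AE y in (lebesgue :: 'b::euclidean_space measure). P y"
  shows "AE z in (lebesgue :: ('a::euclidean_space \<times> 'b) measure). P (snd z)"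
proof -
  obtain N where N: "N \<in> null_sets lborel" "{y. \<not> P y} \<subseteq> N"
    using assms by (auto simp: eventually_ae_filter null_sets_completion_iff2)
  have "(UNIV :: 'a set) \<times> N \<in> null_sets (lborel \<Otimes>\<^sub>M lborel)"
    using N by (intro lborel.times_in_null_sets2) simp_all
  then have "UNIV \<times> N \<in> null_sets (lebesgue :: ('a \<times> 'b) measure)"
    by (simp add: lborel_prod null_sets_completionI)
  then show ?thesis
    by (rule AE_I') (use N in auto)
qed

text \<open>Each horizontal section of the preimage of a null set under \<open>(x, y) \<mapsto> x - y\<close> is a
  translate of that null set.\<close>
lemma AE_lebesgue_pair_diff:
  assumes "AE x in (lebesgue :: 'a::euclidean_space measure). P x"
  shows "AE z in (lebesgue :: ('a \<times> 'a) measure). P (fst z - snd z)"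
proof -
  obtain N where N: "N \<in> null_sets lborel" "{x. \<not> P x} \<subseteq> N"
    using assms by (auto simp: eventually_ae_filter null_sets_completion_iff2)
  define S where "S = (\<lambda>z::'a \<times> 'a. fst z - snd z) -` N"
  have "(\<lambda>z::'a \<times> 'a. fst z - snd z) \<in> borel_measurable borel"
    by (intro borel_measurable_continuous_onI continuous_intros)
  then have "S \<in> sets borel"
    using N(1) by (auto simp: S_def null_sets_def measurable_def)
  then have S: "S \<in> sets (lborel \<Otimes>\<^sub>M lborel)"
    by (subst lborel_prod) simp
  have "emeasure (lborel \<Otimes>\<^sub>M lborel) S = (\<integral>\<^sup>+y. emeasure lborel ((\<lambda>x. (x, y)) -` S) \<partial>lborel)"
    using S by (rule lborel_pair.emeasure_pair_measure_alt2)
  also have "\<dots> = (\<integral>\<^sup>+y. 0 \<partial>(lborel :: 'a measure))"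
  proof (rule nn_integral_cong)
    fix y :: 'a
    have "(\<lambda>x. (x, y)) -` S = {x. x - y \<in> N}" by (auto simp: S_def)
    then show "emeasure lborel ((\<lambda>x. (x, y)) -` S) = 0"
      using null_sets_translation[OF N(1), of y] by auto
  qed
  finally have "S \<in> null_sets (lborel \<Otimes>\<^sub>M lborel)"
    using S by auto
  then have "S \<in> null_sets (lebesgue :: ('a \<times> 'a) measure)"
    by (simp add: lborel_prod null_sets_completionI)
  then show ?thesis
    by (rule AE_I') (use N in \<open>auto simp: S_def\<close>)
qed

lemma set_borel_measurable_lebesgue_AE_eq_borel:
  fixes u :: "'a::euclidean_space \<Rightarrow> complex"
  assumes "set_borel_measurable lebesgue \<Omega> u"
  obtains g where "g \<in> borel_measurable borel" "AE x in lebesgue. x \<in> \<Omega> \<longrightarrow> u x = g x"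
proof -
  define h where "h = (\<lambda>x. indicator \<Omega> x *\<^sub>R u x)"
  have hm: "h \<in> borel_measurable lebesgue"
    using assms by (simp add: h_def set_borel_measurable_def)
  have "(\<lambda>x. Re (h x)) \<in> borel_measurable (completion lborel)" using hm by measurable
  then obtain gr where gr: "gr \<in> borel_measurable lborel" "AE x in lborel. Re (h x) = gr x"
    using completion_ex_borel_measurable_real by blast
  have "(\<lambda>x. Im (h x)) \<in> borel_measurable (completion lborel)" using hm by measurable
  then obtain gi where gi: "gi \<in> borel_measurable lborel" "AE x in lborel. Im (h x) = gi x"
    using completion_ex_borel_measurable_real by blast
  define g where "g x = Complex (gr x) (gi x)" for x
  have "g \<in> borel_measurable borel"
    using gr gi by (simp add: g_def borel_measurable_complex_iff)
  moreover have "AE x in lborel. x \<in> \<Omega> \<longrightarrow> u x = g x"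
    using gr(2) gi(2) by eventually_elim (auto simp: g_def h_def complex_eq_iff)
  ultimately show ?thesis
    using that AE_completion by blast
qed

lemma emeasure_open_Int_ball_pos:
  fixes \<Omega> :: "'a::euclidean_space set"
  assumes "open \<Omega>" "c \<in> \<Omega>" "0 < r"
  shows "0 < emeasure lborel (\<Omega> \<inter> ball c r)"
proof -
  obtain e where e: "0 < e" "ball c e \<subseteq> \<Omega>"
    using assms open_contains_ball by blast
  have "0 < measure lborel (ball c (min e r))"
    using e assms by simp
  then have "0 < emeasure lborel (ball c (min e r))"
    using emeasure_lborel_ball_finite[of c "min e r"] by (simp add: emeasure_eq_ennreal_measure)
  also have "\<dots> \<le> emeasure lborel (\<Omega> \<inter> ball c r)"
    using e assms(1) by (intro emeasure_mono) auto
  finally show ?thesis .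
qed

lemma open_bounded_emeasure:
  fixes \<Omega> :: "'a::euclidean_space set"
  assumes "open \<Omega>" "bounded \<Omega>" "\<Omega> \<noteq> {}"
  shows "0 < emeasure lborel \<Omega>" "emeasure lborel \<Omega> < \<infinity>"
proof -
  obtain x where "x \<in> \<Omega>"
    using assms(3) by blast
  have "0 < emeasure lborel (\<Omega> \<inter> ball x 1)"
    using emeasure_open_Int_ball_pos[OF assms(1) \<open>x \<in> \<Omega>\<close>] by simp
  also have "\<dots> \<le> emeasure lborel \<Omega>"
    using assms(1) by (intro emeasure_mono) auto
  finally show "0 < emeasure lborel \<Omega>" .
  show "emeasure lborel \<Omega> < \<infinity>"
    using assms(2) by (rule emeasure_bounded_finite)
qed

lemma open_bounded_measure:
  fixes \<Omega> :: "'a::euclidean_space set"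
  assumes "open \<Omega>" "bounded \<Omega>" "\<Omega> \<noteq> {}"
  shows "\<Omega> \<in> sets lebesgue" "emeasure lebesgue \<Omega> < \<infinity>" "0 < measure lebesgue \<Omega>"
  using open_bounded_emeasure[OF assms] assms(1)
  by (simp_all add: measure_def enn2real_positive_iff)

lemma bounded_finite_ball_cover:
  fixes \<Omega> :: "'a::euclidean_space set"
  assumes "bounded \<Omega>" "0 < r"
  obtains C where "C \<subseteq> \<Omega>" "finite C" "\<Omega> \<subseteq> (\<Union>c\<in>C. ball c r)"
proof -
  have cpt: "compact (closure \<Omega>)"
    using assms by (simp add: compact_closure)
  have cov: "closure \<Omega> \<subseteq> (\<Union>c\<in>\<Omega>. ball c r)"
  proof
    fix x assume "x \<in> closure \<Omega>"
    then obtain c where "c \<in> \<Omega>" "dist c x < r"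
      using assms(2) closure_approachable by blast
    then show "x \<in> (\<Union>c\<in>\<Omega>. ball c r)" by auto
  qed
  obtain C where "C \<subseteq> \<Omega>" "finite C" "closure \<Omega> \<subseteq> (\<Union>c\<in>C. ball c r)"
    by (rule compactE_image[OF cpt _ cov]) auto
  then show ?thesis
    using closure_subset[of \<Omega>] that by (meson subset_trans)
qed

section \<open>Energies of differences\<close>

lemma norm_diff_powr_le:
  fixes a b c :: complex
  assumes "0 \<le> p"
  shows "cmod (a - b) powr p \<le> 2 powr p * (cmod (a - c) powr p + cmod (c - b) powr p)"
proof -
  define m where "m = max (cmod (a - c)) (cmod (c - b))"
  have "cmod (a - b) \<le> cmod (a - c) + cmod (c - b)"
    using norm_triangle_ineq[of "a - c" "c - b"] by simp
  also have "\<dots> \<le> 2 * m" by (simp add: m_def)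
  finally have "cmod (a - b) powr p \<le> (2 * m) powr p"
    using assms by (intro powr_mono2) auto
  also have "\<dots> = 2 powr p * m powr p" by (simp add: powr_mult m_def)
  also have "m powr p \<le> cmod (a - c) powr p + cmod (c - b) powr p"
    by (simp add: m_def max_def)
  finally show ?thesis by simp
qed

definition pair_energy :: "real \<Rightarrow> ('a::euclidean_space \<Rightarrow> complex) \<Rightarrow> 'a set \<Rightarrow> 'a set \<Rightarrow> ennreal" where
  "pair_energy p f A B = (\<integral>\<^sup>+x. \<integral>\<^sup>+y. indicator A x * indicator B y * ennreal (cmod (f x - f y) powr p) \<partial>lborel \<partial>lborel)"

definition local_energy :: "real \<Rightarrow> real \<Rightarrow> ('a::euclidean_space \<Rightarrow> complex) \<Rightarrow> 'a set \<Rightarrow> ennreal" where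
  "local_energy p \<rho> f \<Omega> = (\<integral>\<^sup>+x. \<integral>\<^sup>+y. indicator \<Omega> x * indicator \<Omega> y * indicator (ball x \<rho>) y
      * ennreal (cmod (f x - f y) powr p) \<partial>lborel \<partial>lborel)"

text \<open>The triangle inequality \<open>|f x - f y| \<le> |f x - f z| + |f z - f y|\<close>, averaged over \<open>z \<in> D\<close>.\<close>
lemma emeasure_mult_norm_diff_powr_le:
  fixes f :: "'a::euclidean_space \<Rightarrow> complex"
  assumes [measurable]: "f \<in> borel_measurable borel" "D \<in> sets borel" and p: "0 \<le> p"
  shows "emeasure lborel D * ennreal (cmod (f x - f y) powr p)
    \<le> ennreal (2 powr p) * (\<integral>\<^sup>+z. indicator D z * ennreal (cmod (f x - f z) powr p) \<partial>lborel)
      + ennreal (2 powr p) * (\<integral>\<^sup>+z. indicator D z * ennreal (cmod (f z - f y) powr p) \<partial>lborel)"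
proof -
  define d where "d x y = ennreal (cmod (f x - f y) powr p)" for x y
  define c where "c = ennreal (2 powr p)"
  have "emeasure lborel D * d x y = (\<integral>\<^sup>+z. d x y * indicator D z \<partial>lborel)"
    by (subst nn_integral_cmult_indicator) (simp_all add: mult.commute)
  also have "\<dots> \<le> (\<integral>\<^sup>+z. c * (indicator D z * d x z) + c * (indicator D z * d z y) \<partial>lborel)"
  proof (rule nn_integral_mono)
    fix z
    have "d x y \<le> c * (d x z + d z y)"
      unfolding d_def c_def using norm_diff_powr_le[OF p, of "f x" "f y" "f z"]
      by (simp add: ennreal_mult'[symmetric] ennreal_plus[symmetric] del: ennreal_plus)
    then show "d x y * indicator D z \<le> c * (indicator D z * d x z) + c * (indicator D z * d z y)"
      by (cases "z \<in> D") (simp_all add: distrib_left)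
  qed
  also have "\<dots> = c * (\<integral>\<^sup>+z. indicator D z * d x z \<partial>lborel) + c * (\<integral>\<^sup>+z. indicator D z * d z y \<partial>lborel)"
    by (simp add: d_def nn_integral_add nn_integral_cmult)
  finally show ?thesis
    by (simp add: c_def d_def)
qed

lemma pair_energy_triangle:
  fixes f :: "'a::euclidean_space \<Rightarrow> complex"
  assumes [measurable]: "f \<in> borel_measurable borel" "A \<in> sets borel" "B \<in> sets borel" "D \<in> sets borel"
    and p: "0 \<le> p"
  shows "emeasure lborel D * pair_energy p f A B
    \<le> ennreal (2 powr p) * (emeasure lborel B * pair_energy p f A D + emeasure lborel A * pair_energy p f D B)"
proof -
  define d where "d x y = ennreal (cmod (f x - f y) powr p)" for x y
  define c where "c = ennreal (2 powr p)"
  define L where "L x = (\<integral>\<^sup>+z. indicator D z * d x z \<partial>lborel)" for x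
  define R where "R y = (\<integral>\<^sup>+z. indicator D z * d z y \<partial>lborel)" for y
  have [measurable]: "L \<in> borel_measurable borel" "R \<in> borel_measurable borel"
    unfolding L_def R_def d_def by measurable
  have avg: "emeasure lborel D * d x y \<le> c * L x + c * R y" for x y
    unfolding c_def L_def R_def d_def using assms(1,4) p by (rule emeasure_mult_norm_diff_powr_le)
  have "emeasure lborel D * pair_energy p f A B
      = (\<integral>\<^sup>+x. \<integral>\<^sup>+y. indicator A x * indicator B y * (emeasure lborel D * d x y) \<partial>lborel \<partial>lborel)"
    by (simp add: pair_energy_def d_def nn_integral_cmult[symmetric] mult_ac)
  also have "\<dots> \<le> (\<integral>\<^sup>+x. \<integral>\<^sup>+y. c * (indicator A x * indicator B y * L x)
      + c * (indicator A x * indicator B y * R y) \<partial>lborel \<partial>lborel)"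
  proof (intro nn_integral_mono)
    fix x y
    have "indicator A x * indicator B y * (emeasure lborel D * d x y)
        \<le> indicator A x * indicator B y * (c * L x + c * R y)"
      using avg by (rule mult_left_mono) simp
    then show "indicator A x * indicator B y * (emeasure lborel D * d x y)
        \<le> c * (indicator A x * indicator B y * L x) + c * (indicator A x * indicator B y * R y)"
      by (simp add: distrib_left mult_ac)
  qed
  also have "\<dots> = c * (\<integral>\<^sup>+x. \<integral>\<^sup>+y. indicator A x * indicator B y * L x \<partial>lborel \<partial>lborel)
      + c * (\<integral>\<^sup>+x. \<integral>\<^sup>+y. indicator A x * indicator B y * R y \<partial>lborel \<partial>lborel)"
    by (simp add: nn_integral_add nn_integral_cmult)
  also have "(\<integral>\<^sup>+x. \<integral>\<^sup>+y. indicator A x * indicator B y * L x \<partial>lborel \<partial>lborel)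
      = emeasure lborel B * pair_energy p f A D"
  proof -
    have "(\<integral>\<^sup>+y. indicator A x * indicator B y * L x \<partial>lborel) = emeasure lborel B * (indicator A x * L x)"
      for x using nn_integral_cmult_indicator[of B lborel "indicator A x * L x"] by (simp add: mult_ac)
    moreover have "(\<integral>\<^sup>+x. indicator A x * L x \<partial>lborel) = pair_energy p f A D"
      by (simp add: pair_energy_def L_def d_def nn_integral_cmult[symmetric] mult_ac)
    ultimately show ?thesis
      by (simp add: nn_integral_cmult)
  qed
  also have "(\<integral>\<^sup>+x. \<integral>\<^sup>+y. indicator A x * indicator B y * R y \<partial>lborel \<partial>lborel)
      = emeasure lborel A * pair_energy p f D B"
  proof -
    have "(\<integral>\<^sup>+y. indicator B y * R y \<partial>lborel)
        = (\<integral>\<^sup>+y. \<integral>\<^sup>+z. indicator D z * indicator B y * d z y \<partial>lborel \<partial>lborel)"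
      by (simp add: R_def d_def nn_integral_cmult[symmetric] mult_ac)
    also have "\<dots> = pair_energy p f D B"
      unfolding pair_energy_def d_def by (rule lborel_pair.Fubini') simp
    finally have "(\<integral>\<^sup>+y. indicator B y * R y \<partial>lborel) = pair_energy p f D B" .
    moreover have "(\<integral>\<^sup>+y. indicator A x * indicator B y * R y \<partial>lborel)
        = indicator A x * (\<integral>\<^sup>+y. indicator B y * R y \<partial>lborel)" for x
      by (simp add: nn_integral_cmult[symmetric] mult_ac)
    ultimately show ?thesis
      by (simp add: nn_integral_multc mult.commute)
  qed
  finally show ?thesis by (simp add: c_def distrib_left)
qed

lemma pair_energy_le_sum_cover:
  fixes f :: "'a::euclidean_space \<Rightarrow> complex"
  assumes [measurable]: "f \<in> borel_measurable borel" "\<And>c. A c \<in> sets borel"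
    and "finite C" "S \<subseteq> (\<Union>c\<in>C. A c)"
  shows "pair_energy p f S S \<le> (\<Sum>a\<in>C. \<Sum>b\<in>C. pair_energy p f (A a) (A b))"
proof -
  define d where "d x y = ennreal (cmod (f x - f y) powr p)" for x y
  have "pair_energy p f S S
      \<le> (\<integral>\<^sup>+x. \<integral>\<^sup>+y. (\<Sum>a\<in>C. \<Sum>b\<in>C. indicator (A a) x * indicator (A b) y * d x y) \<partial>lborel \<partial>lborel)"
    unfolding pair_energy_def
  proof (intro nn_integral_mono)
    fix x y
    show "indicator S x * indicator S y * ennreal (cmod (f x - f y) powr p)
        \<le> (\<Sum>a\<in>C. \<Sum>b\<in>C. indicator (A a) x * indicator (A b) y * d x y)"
    proof (cases "x \<in> S \<and> y \<in> S")
      case True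
      then obtain a b where ab: "a \<in> C" "x \<in> A a" "b \<in> C" "y \<in> A b"
        using assms(4) by blast
      have "indicator S x * indicator S y * ennreal (cmod (f x - f y) powr p)
          = indicator (A a) x * indicator (A b) y * d x y"
        using True ab by (simp add: d_def)
      also have "\<dots> \<le> (\<Sum>b\<in>C. indicator (A a) x * indicator (A b) y * d x y)"
        using member_le_sum[OF ab(3) _ assms(3), of "\<lambda>b. indicator (A a) x * indicator (A b) y * d x y"]
        by simp
      also have "\<dots> \<le> (\<Sum>a\<in>C. \<Sum>b\<in>C. indicator (A a) x * indicator (A b) y * d x y)"
        using member_le_sum[OF ab(1) _ assms(3),
            of "\<lambda>a. \<Sum>b\<in>C. indicator (A a) x * indicator (A b) y * d x y"]
        by simp
      finally show ?thesis .
    qed (auto simp: indicator_def)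
  qed
  also have "\<dots> = (\<Sum>a\<in>C. \<Sum>b\<in>C. pair_energy p f (A a) (A b))"
    by (simp add: pair_energy_def d_def nn_integral_sum)
  finally show ?thesis .
qed

text \<open>Induction along the chain: each step passes through the previous piece with
  \<open>pair_energy_triangle\<close>, dividing by the positive measure of that piece.\<close>
lemma pair_energy_chain_bound:
  fixes A :: "'c \<Rightarrow> 'a::euclidean_space set"
  assumes "(a, b) \<in> R\<^sup>+" and "R \<subseteq> C \<times> C" and p: "0 \<le> p"
    and [measurable]: "\<And>c. A c \<in> sets borel"
    and pos: "\<And>c. c \<in> C \<Longrightarrow> 0 < emeasure lborel (A c)"
    and fin: "\<And>c. emeasure lborel (A c) < \<infinity>"
    and link: "\<And>f c c'. f \<in> borel_measurable borel \<Longrightarrow> (c, c') \<in> R \<Longrightarrow> pair_energy p f (A c) (A c') \<le> E f"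
  shows "\<exists>B<\<infinity>. \<forall>f\<in>borel_measurable borel. pair_energy p f (A a) (A b) \<le> B * E f"
  using assms(1)
proof (induction rule: trancl_induct)
  case (base b)
  then show ?case
    using link by (intro exI[of _ 1]) auto
next
  case (step b b')
  from step.IH obtain B where B: "B < \<infinity>"
    and IH: "\<And>f. f \<in> borel_measurable borel \<Longrightarrow> pair_energy p f (A a) (A b) \<le> B * E f"
    by blast
  have b: "b \<in> C" using step.hyps(2) assms(2) by auto
  define c where "c = ennreal (2 powr p)"
  define B' where "B' = c * (emeasure lborel (A b') * B + emeasure lborel (A a)) / emeasure lborel (A b)"
  have "c * (emeasure lborel (A b') * B + emeasure lborel (A a)) < \<infinity>"
    using fin B by (simp add: c_def ennreal_mult_less_top)
  then have "B' < \<infinity>"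
    using pos[OF b] unfolding B'_def
    by (metis ennreal_divide_eq_top_iff less_top not_gr_zero infinity_ennreal_def)
  moreover have "pair_energy p f (A a) (A b') \<le> B' * E f" if f: "f \<in> borel_measurable borel" for f
  proof -
    have "emeasure lborel (A b) * pair_energy p f (A a) (A b')
        \<le> c * (emeasure lborel (A b') * pair_energy p f (A a) (A b) + emeasure lborel (A a) * pair_energy p f (A b) (A b'))"
      unfolding c_def using f p by (intro pair_energy_triangle) simp_all
    also have "\<dots> \<le> c * (emeasure lborel (A b') * (B * E f) + emeasure lborel (A a) * E f)"
      using IH[OF f] link[OF f step.hyps(2)] by (intro mult_left_mono add_mono) auto
    also have "\<dots> = (c * (emeasure lborel (A b') * B + emeasure lborel (A a))) * E f"
      by (simp add: algebra_simps)
    finally have *: "pair_energy p f (A a) (A b') * emeasure lborel (A b)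
        \<le> (c * (emeasure lborel (A b') * B + emeasure lborel (A a))) * E f"
      by (simp add: mult.commute)
    have "pair_energy p f (A a) (A b') = pair_energy p f (A a) (A b') * emeasure lborel (A b) / emeasure lborel (A b)"
      using pos[OF b] fin[of b] by (simp add: mult_divide_eq_ennreal)
    also have "\<dots> \<le> (c * (emeasure lborel (A b') * B + emeasure lborel (A a))) * E f / emeasure lborel (A b)"
      using * by (rule divide_right_mono_ennreal)
    also have "\<dots> = B' * E f"
      by (simp add: B'_def ennreal_times_divide ennreal_divide_times mult_ac)
    finally show ?thesis .
  qed
  ultimately show ?case by blast
qed

lemma connected_cover_overlap_chain:
  assumes "connected S" "S = (\<Union>c\<in>C. A c)" "\<And>c. c \<in> C \<Longrightarrow> open (A c)" "\<And>c. c \<in> C \<Longrightarrow> A c \<noteq> {}"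
    and "a \<in> C" "b \<in> C"
  shows "(a, b) \<in> {(c, c'). c \<in> C \<and> c' \<in> C \<and> A c \<inter> A c' \<noteq> {}}\<^sup>*"
    (is "_ \<in> ?R\<^sup>*")
proof (rule ccontr)
  assume ab: "(a, b) \<notin> ?R\<^sup>*"
  define U where "U = (\<Union>c\<in>{c\<in>C. (a, c) \<in> ?R\<^sup>*}. A c)"
  define V where "V = (\<Union>c\<in>{c\<in>C. (a, c) \<notin> ?R\<^sup>*}. A c)"
  have "open U" "open V"
    using assms(3) unfolding U_def V_def by (auto intro!: open_UN)
  moreover have "U \<inter> V \<inter> S = {}"
  proof (rule ccontr)
    assume "U \<inter> V \<inter> S \<noteq> {}"
    then obtain x c c' where "c \<in> C" "(a, c) \<in> ?R\<^sup>*" "x \<in> A c" "c' \<in> C" "(a, c') \<notin> ?R\<^sup>*" "x \<in> A c'"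
      unfolding U_def V_def by blast
    then have "(c, c') \<in> ?R" by blast
    with \<open>(a, c) \<in> ?R\<^sup>*\<close> \<open>(a, c') \<notin> ?R\<^sup>*\<close> show False
      by (meson rtrancl_into_rtrancl)
  qed
  moreover have "S \<subseteq> U \<union> V"
    using assms(2) unfolding U_def V_def by auto
  ultimately have "U \<inter> S = {} \<or> V \<inter> S = {}"
    using connectedD[OF assms(1)] by blast
  moreover have "A a \<subseteq> U \<inter> S" "A b \<subseteq> V \<inter> S"
    using assms(2,5,6) ab unfolding U_def V_def by auto
  then have "U \<inter> S \<noteq> {}" "V \<inter> S \<noteq> {}"
    using assms(4)[OF assms(5)] assms(4)[OF assms(6)] by blast+
  ultimately show False by blast
qed

lemma pair_energy_le_of_overlap_chain:
  fixes A :: "'c \<Rightarrow> 'a::euclidean_space set"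
  assumes "finite C" "S \<subseteq> (\<Union>c\<in>C. A c)" "R \<subseteq> C \<times> C" and p: "0 \<le> p"
    and A_sets[measurable]: "\<And>c. A c \<in> sets borel"
    and A_pos: "\<And>c. c \<in> C \<Longrightarrow> 0 < emeasure lborel (A c)" and A_fin: "\<And>c. emeasure lborel (A c) < \<infinity>"
    and chain: "\<And>a b. a \<in> C \<Longrightarrow> b \<in> C \<Longrightarrow> (a, b) \<in> R\<^sup>+"
    and link: "\<And>f c c'. f \<in> borel_measurable borel \<Longrightarrow> (c, c') \<in> R \<Longrightarrow> pair_energy p f (A c) (A c') \<le> E f"
  obtains K where "K < \<infinity>" "\<And>f. f \<in> borel_measurable borel \<Longrightarrow> pair_energy p f S S \<le> K * E f"
proof -
  have "\<exists>B<\<infinity>. \<forall>f\<in>borel_measurable borel. pair_energy p f (A a) (A b) \<le> B * E f"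
    if "a \<in> C" "b \<in> C" for a b
    using chain[OF that] assms(3) p A_sets A_pos A_fin link by (rule pair_energy_chain_bound)
  then obtain B where B: "\<And>a b. a \<in> C \<Longrightarrow> b \<in> C \<Longrightarrow> B a b < \<infinity>"
    "\<And>a b f. a \<in> C \<Longrightarrow> b \<in> C \<Longrightarrow> f \<in> borel_measurable borel \<Longrightarrow> pair_energy p f (A a) (A b) \<le> B a b * E f"
    by metis
  show ?thesis
  proof
    show "(\<Sum>a\<in>C. \<Sum>b\<in>C. B a b) < \<infinity>"
      using B(1) assms(1) by (simp add: ennreal_sum_less_top)
  next
    fix f :: "'a \<Rightarrow> complex"
    assume f[measurable]: "f \<in> borel_measurable borel"
    have "pair_energy p f S S \<le> (\<Sum>a\<in>C. \<Sum>b\<in>C. pair_energy p f (A a) (A b))"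
      using assms(1,2) by (intro pair_energy_le_sum_cover f A_sets)
    also have "\<dots> \<le> (\<Sum>a\<in>C. \<Sum>b\<in>C. B a b * E f)"
      using B(2) f by (intro sum_mono) auto
    finally show "pair_energy p f S S \<le> (\<Sum>a\<in>C. \<Sum>b\<in>C. B a b) * E f"
      by (simp add: sum_distrib_right)
  qed
qed

text \<open>Cover \<open>\<Omega>\<close> by finitely many pieces of diameter less
  than \<open>\<rho>/2\<close>: overlapping pieces are \<open>\<rho>\<close>-close, and by connectedness any two pieces are
  linked by a chain of overlapping ones.\<close>
lemma pair_energy_le_local_energy:
  fixes \<Omega> :: "'a::euclidean_space set"
  assumes \<Omega>: "open \<Omega>" "connected \<Omega>" "bounded \<Omega>" and "0 < \<rho>" and p: "0 \<le> p"
  obtains K where "K < \<infinity>"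
    "\<And>f. f \<in> borel_measurable borel \<Longrightarrow> pair_energy p f \<Omega> \<Omega> \<le> K * local_energy p \<rho> f \<Omega>"
proof -
  define r where "r = \<rho> / 4"
  have r: "0 < r" using \<open>0 < \<rho>\<close> by (simp add: r_def)
  obtain C where C: "C \<subseteq> \<Omega>" "finite C" "\<Omega> \<subseteq> (\<Union>c\<in>C. ball c r)"
    using bounded_finite_ball_cover[OF \<Omega>(3) r] by blast
  define A where "A c = \<Omega> \<inter> ball c r" for c
  define R where "R = {(c, c'). c \<in> C \<and> c' \<in> C \<and> A c \<inter> A c' \<noteq> {}}"
  have A_center: "c \<in> A c" if "c \<in> C" for c
    using that C(1) r by (auto simp: A_def)
  have cover: "\<Omega> = (\<Union>c\<in>C. A c)"
    using C by (auto simp: A_def)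
  have chain: "(a, b) \<in> R\<^sup>+" if "a \<in> C" "b \<in> C" for a b
  proof -
    have "open (A c)" "A c \<noteq> {}" if "c \<in> C" for c
      using \<Omega>(1) A_center[OF that] by (auto simp: A_def)
    then have "(a, b) \<in> R\<^sup>*"
      unfolding R_def using that \<Omega>(2) cover by (intro connected_cover_overlap_chain)
    moreover have "(a, a) \<in> R"
      using that A_center by (auto simp: R_def)
    ultimately show "(a, b) \<in> R\<^sup>+"
      by (rule rtrancl_into_trancl2[rotated])
  qed
  have link: "pair_energy p f (A c) (A c') \<le> local_energy p \<rho> f \<Omega>" if cc': "(c, c') \<in> R" for f c c'
    unfolding pair_energy_def local_energy_def
  proof (intro nn_integral_mono)
    fix x y
    obtain w where "w \<in> A c" "w \<in> A c'"
      using cc' by (auto simp: R_def)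
    then have "dist x y < \<rho>" if "x \<in> A c" "y \<in> A c'"
      using that dist_triangle[of x y c] dist_triangle[of c y w] dist_triangle[of w y c']
      by (auto simp: A_def r_def dist_commute)
    then show "indicator (A c) x * indicator (A c') y * ennreal (cmod (f x - f y) powr p)
        \<le> indicator \<Omega> x * indicator \<Omega> y * indicator (ball x \<rho>) y * ennreal (cmod (f x - f y) powr p)"
      by (auto simp: A_def indicator_def)
  qed
  show ?thesis
  proof (rule pair_energy_le_of_overlap_chain[OF C(2) _ _ p _ _ _ chain link])
    show "A c \<in> sets borel" "emeasure lborel (A c) < \<infinity>" for c
      using \<Omega>(1) emeasure_mono[of "A c" "ball c r" lborel] emeasure_lborel_ball_finite[of c r]
      by (auto simp: A_def)
    show "0 < emeasure lborel (A c)" if "c \<in> C" for c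
      using emeasure_open_Int_ball_pos[OF \<Omega>(1) _ r] that C(1) by (auto simp: A_def)
  qed (use that cover in \<open>auto simp: R_def\<close>)
qed

text \<open>The slack \<open>+ 1\<close> spares us from showing that the inner integral is at most its mean
  on a set of positive measure.\<close>
lemma exists_point_energy_le:
  fixes f :: "'a::euclidean_space \<Rightarrow> complex"
  assumes [measurable]: "f \<in> borel_measurable borel" "\<Omega> \<in> sets borel"
    and pos: "0 < emeasure lborel \<Omega>" and fin: "emeasure lborel \<Omega> < \<infinity>"
    and G: "pair_energy p f \<Omega> \<Omega> \<le> T" and T: "T < \<infinity>"
  shows "\<exists>x\<in>\<Omega>. (\<integral>\<^sup>+y. indicator \<Omega> y * ennreal (cmod (f x - f y) powr p) \<partial>lborel) \<le> (T + 1) / emeasure lborel \<Omega>"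
proof (rule ccontr)
  define I where "I x = (\<integral>\<^sup>+y. indicator \<Omega> y * ennreal (cmod (f x - f y) powr p) \<partial>lborel)" for x
  assume "\<not> ?thesis"
  then have less: "(T + 1) / emeasure lborel \<Omega> < I x" if "x \<in> \<Omega>" for x
    using that by (auto simp: not_le I_def)
  have "T + 1 = (T + 1) / emeasure lborel \<Omega> * emeasure lborel \<Omega>"
    using pos fin by (simp add: ennreal_divide_times ennreal_divide_self)
  also have "\<dots> = (\<integral>\<^sup>+x. (T + 1) / emeasure lborel \<Omega> * indicator \<Omega> x \<partial>lborel)"
    by (simp add: nn_integral_cmult_indicator)
  also have "\<dots> \<le> (\<integral>\<^sup>+x. indicator \<Omega> x * I x \<partial>lborel)"
    using less by (intro nn_integral_mono) (auto simp: indicator_def less_imp_le)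
  also have "\<dots> = pair_energy p f \<Omega> \<Omega>"
    unfolding pair_energy_def I_def by (simp add: nn_integral_cmult[symmetric] mult_ac)
  also have "\<dots> \<le> T" by (rule G)
  finally have "T + 1 \<le> T + 0" by simp
  then show False
    using T by (simp add: ennreal_add_left_cancel_le)
qed

section \<open>Integrals of powers and mean values\<close>

lemma set_borel_measurable_const:
  "A \<in> sets lebesgue \<Longrightarrow> set_borel_measurable lebesgue A (\<lambda>_. c :: complex)"
  unfolding set_borel_measurable_def
  by (intro borel_measurable_scaleR borel_measurable_indicator borel_measurable_const)

lemma set_borel_measurable_diff_const:
  assumes "set_borel_measurable lebesgue A u" "A \<in> sets lebesgue"
  shows "set_borel_measurable lebesgue A (\<lambda>x. u x - (c :: complex))"
proof -
  have "(\<lambda>x. indicator A x *\<^sub>R u x - indicator A x *\<^sub>R c) \<in> borel_measurable lebesgue"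
    using assms unfolding set_borel_measurable_def by measurable
  then show ?thesis
    unfolding set_borel_measurable_def by (simp add: scaleR_diff_right)
qed

lemma Lp_integrand_measurable:
  fixes g :: "'a::euclidean_space \<Rightarrow> complex"
  assumes "set_borel_measurable lebesgue A g"
  shows "(\<lambda>x. ennreal (cmod (g x) powr p) * indicator A x) \<in> borel_measurable lebesgue"
proof -
  have "(\<lambda>x. ennreal (cmod (indicator A x *\<^sub>R g x) powr p)) \<in> borel_measurable lebesgue"
    using assms unfolding set_borel_measurable_def by measurable
  then show ?thesis
    by (rule measurable_cong[THEN iffD1, rotated]) (simp add: indicator_def)
qed

lemma Lp_integral_const:
  "A \<in> sets lebesgue \<Longrightarrow> Lp_integral p A (\<lambda>_. c) = ennreal (cmod c powr p) * emeasure lebesgue A"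
  unfolding Lp_integral_def by (simp add: nn_integral_cmult_indicator)

lemma Lp_integral_cmult:
  assumes "set_borel_measurable lebesgue A g" "0 \<le> l"
  shows "Lp_integral p A (\<lambda>x. of_real l * g x) = ennreal (l powr p) * Lp_integral p A g"
proof -
  have "Lp_integral p A (\<lambda>x. of_real l * g x)
      = (\<integral>\<^sup>+x. ennreal (l powr p) * (ennreal (cmod (g x) powr p) * indicator A x) \<partial>lebesgue)"
    unfolding Lp_integral_def using assms(2)
    by (intro nn_integral_cong) (simp add: norm_mult powr_mult ennreal_mult mult.assoc)
  then show ?thesis
    using Lp_integrand_measurable[OF assms(1)] by (simp add: Lp_integral_def nn_integral_cmult)
qed

lemma Lp_integral_diff_const_le:
  fixes u :: "'a::euclidean_space \<Rightarrow> complex"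
  assumes "0 \<le> p" "A \<in> sets lebesgue" "set_borel_measurable lebesgue A u"
  shows "Lp_integral p A (\<lambda>x. u x - b)
    \<le> ennreal (2 powr p) * (Lp_integral p A (\<lambda>x. u x - c) + ennreal (cmod (c - b) powr p) * emeasure lebesgue A)"
proof -
  have "Lp_integral p A (\<lambda>x. u x - b) \<le> (\<integral>\<^sup>+x. ennreal (2 powr p) * (ennreal (cmod (u x - c) powr p)
      * indicator A x + ennreal (cmod (c - b) powr p) * indicator A x) \<partial>lebesgue)"
    unfolding Lp_integral_def
  proof (intro nn_integral_mono)
    fix x
    have "ennreal (cmod (u x - b) powr p)
        \<le> ennreal (2 powr p) * (ennreal (cmod (u x - c) powr p) + ennreal (cmod (c - b) powr p))"
      using norm_diff_powr_le[OF assms(1), of "u x" b c]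
      by (simp add: ennreal_leI ennreal_plus[symmetric] ennreal_mult[symmetric] del: ennreal_plus)
    then show "ennreal (cmod (u x - b) powr p) * indicator A x \<le> ennreal (2 powr p)
        * (ennreal (cmod (u x - c) powr p) * indicator A x + ennreal (cmod (c - b) powr p) * indicator A x)"
      by (cases "x \<in> A") auto
  qed
  also have "\<dots> = ennreal (2 powr p) * (Lp_integral p A (\<lambda>x. u x - c) + ennreal (cmod (c - b) powr p) * emeasure lebesgue A)"
    using Lp_integrand_measurable[OF set_borel_measurable_diff_const[OF assms(3,2)]] assms(2)
    unfolding Lp_integral_def by (simp add: nn_integral_add nn_integral_cmult nn_integral_cmult_indicator)
  finally show ?thesis .
qed

lemma Lp_integral_diff_const_finite:
  fixes u :: "'a::euclidean_space \<Rightarrow> complex"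
  assumes "0 \<le> p" "A \<in> sets lebesgue" "emeasure lebesgue A < \<infinity>" "set_borel_measurable lebesgue A u"
    and "Lp_integral p A (\<lambda>x. u x - c) < \<infinity>"
  shows "Lp_integral p A (\<lambda>x. u x - b) < \<infinity>"
  using Lp_integral_diff_const_le[OF assms(1,2,4), of b c] assms(3,5)
  by (simp add: ennreal_mult_less_top order.strict_trans1)

lemma le_add_powr_scaled:
  fixes s t p :: real
  assumes "0 \<le> s" "0 < t" "1 \<le> p"
  shows "s \<le> t + t powr (1 - p) * s powr p"
proof (cases "s \<le> t")
  case True
  then show ?thesis
    using assms by (smt (verit) powr_ge_zero mult_nonneg_nonneg)
next
  case False
  have "1 \<le> (s / t) powr (p - 1)"
    using False assms by (intro ge_one_powr_ge_zero) auto
  then have "s \<le> s * (s / t) powr (p - 1)"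
    using assms by (simp add: mult_le_cancel_left1)
  also have "\<dots> = t powr (1 - p) * s powr p"
    using False assms by (simp add: powr_divide powr_diff powr_minus divide_simps)
  finally show ?thesis
    using assms by simp
qed

lemma nn_integral_norm_le_Lp_integral:
  fixes g :: "'a::euclidean_space \<Rightarrow> complex"
  assumes "1 \<le> p" "A \<in> sets lebesgue" "set_borel_measurable lebesgue A g" "0 < t"
  shows "(\<integral>\<^sup>+x. ennreal (cmod (indicator A x *\<^sub>R g x)) \<partial>lebesgue)
     \<le> ennreal t * emeasure lebesgue A + ennreal (t powr (1 - p)) * Lp_integral p A g"
proof -
  have "(\<integral>\<^sup>+x. ennreal (cmod (indicator A x *\<^sub>R g x)) \<partial>lebesgue)
      \<le> (\<integral>\<^sup>+x. ennreal t * indicator A x + ennreal (t powr (1 - p)) * (ennreal (cmod (g x) powr p) * indicator A x) \<partial>lebesgue)"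
  proof (intro nn_integral_mono)
    fix x
    have "ennreal (cmod (g x)) \<le> ennreal (t + t powr (1 - p) * cmod (g x) powr p)"
      using le_add_powr_scaled[OF _ assms(4,1)] by (intro ennreal_leI) simp
    also have "\<dots> = ennreal t + ennreal (t powr (1 - p)) * ennreal (cmod (g x) powr p)"
      using assms(4) by (simp add: ennreal_plus ennreal_mult)
    finally show "ennreal (cmod (indicator A x *\<^sub>R g x)) \<le> ennreal t * indicator A x
        + ennreal (t powr (1 - p)) * (ennreal (cmod (g x) powr p) * indicator A x)"
      by (cases "x \<in> A") simp_all
  qed
  also have "\<dots> = ennreal t * emeasure lebesgue A + ennreal (t powr (1 - p)) * Lp_integral p A g"
    using assms(2) Lp_integrand_measurable[OF assms(3)] unfolding Lp_integral_def
    by (simp add: nn_integral_add nn_integral_cmult nn_integral_cmult_indicator)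
  finally show ?thesis .
qed

lemma set_integrable_if_Lp_integral_finite:
  fixes g :: "'a::euclidean_space \<Rightarrow> complex"
  assumes "1 \<le> p" "A \<in> sets lebesgue" "emeasure lebesgue A < \<infinity>"
    and "set_borel_measurable lebesgue A g" "Lp_integral p A g < \<infinity>"
  shows "set_integrable lebesgue A g"
  unfolding set_integrable_def
proof (rule integrableI_bounded)
  show "(\<lambda>x. indicator A x *\<^sub>R g x) \<in> borel_measurable lebesgue"
    using assms(4) by (simp add: set_borel_measurable_def)
  have "(\<integral>\<^sup>+x. ennreal (cmod (indicator A x *\<^sub>R g x)) \<partial>lebesgue)
      \<le> ennreal 1 * emeasure lebesgue A + ennreal (1 powr (1 - p)) * Lp_integral p A g"
    using nn_integral_norm_le_Lp_integral[OF assms(1,2,4), of 1] by simp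
  also have "\<dots> < \<infinity>"
    using assms(3,5) by (simp add: ennreal_mult_less_top)
  finally show "(\<integral>\<^sup>+x. ennreal (norm (indicator A x *\<^sub>R g x)) \<partial>lebesgue) < \<infinity>"
    by simp
qed

text \<open>Optimise the bound \<open>X \<le> t \<mu> + t\<^sup>1\<^sup>-\<^sup>p I\<close> over \<open>t > 0\<close>, taking \<open>t\<^sup>p = I / \<mu>\<close>.\<close>
lemma powr_le_of_forall_bound:
  fixes X \<mu> I p :: real
  assumes "0 \<le> X" "0 < \<mu>" "0 \<le> I" "1 \<le> p"
    and bound: "\<And>t. 0 < t \<Longrightarrow> X \<le> t * \<mu> + t powr (1 - p) * I"
  shows "X powr p \<le> 2 powr p * \<mu> powr (p - 1) * I"
proof (cases "I = 0")
  case True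
  have "X \<le> 0"
  proof (rule ccontr)
    assume "\<not> X \<le> 0"
    then have "X \<le> X / (2 * \<mu>) * \<mu> + (X / (2 * \<mu>)) powr (1 - p) * I"
      using bound[of "X / (2 * \<mu>)"] assms(2) by simp
    then have "X \<le> X / 2"
      using True assms(2) by simp
    with \<open>\<not> X \<le> 0\<close> show False by simp
  qed
  then show ?thesis
    using True assms(1) by simp
next
  case False
  then have I: "0 < I" using assms(3) by simp
  define t where "t = (I / \<mu>) powr (1 / p)"
  have t: "0 < t" "t powr p = I / \<mu>"
    using I assms(2,4) by (simp_all add: t_def powr_powr)
  have "t powr (1 - p) = t / t powr p"
    using t(1) by (simp add: powr_diff)
  then have "t powr (1 - p) * I = t * \<mu>"
    using t(2) I assms(2) by (simp add: field_simps)
  then have "X \<le> 2 * t * \<mu>"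
    using bound[OF t(1)] by (simp add: mult_ac)
  then have "X powr p \<le> (2 * t * \<mu>) powr p"
    using assms(1,4) by (intro powr_mono2) auto
  also have "\<dots> = 2 powr p * t powr p * (\<mu> powr (p - 1) * \<mu>)"
    using t(1) assms(2) by (simp add: powr_mult powr_diff)
  also have "\<dots> = 2 powr p * \<mu> powr (p - 1) * I"
    using t(2) assms(2) by simp
  finally show ?thesis .
qed

lemma norm_set_integral_powr_le:
  fixes g :: "'a::euclidean_space \<Rightarrow> complex"
  assumes p: "1 \<le> p" and A: "A \<in> sets lebesgue" "emeasure lebesgue A < \<infinity>" "0 < measure lebesgue A"
    and g: "set_borel_measurable lebesgue A g" "Lp_integral p A g < \<infinity>"
  shows "cmod (LINT x:A|lebesgue. g x) powr p \<le> 2 powr p * measure lebesgue A powr (p - 1) * enn2real (Lp_integral p A g)"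
proof (rule powr_le_of_forall_bound[OF norm_ge_zero A(3) enn2real_nonneg p])
  fix t :: real
  assume t: "0 < t"
  have "ennreal (cmod (LINT x:A|lebesgue. g x)) \<le> (\<integral>\<^sup>+x. ennreal (cmod (indicator A x *\<^sub>R g x)) \<partial>lebesgue)"
    using set_integrable_if_Lp_integral_finite[OF p A(1,2) g]
    unfolding set_lebesgue_integral_def set_integrable_def by (rule integral_norm_bound_ennreal)
  also have "\<dots> \<le> ennreal t * emeasure lebesgue A + ennreal (t powr (1 - p)) * Lp_integral p A g"
    using p A(1) g(1) t by (rule nn_integral_norm_le_Lp_integral)
  also have "\<dots> = ennreal (t * measure lebesgue A + t powr (1 - p) * enn2real (Lp_integral p A g))"
    using t A(2) g(2)
    by (simp add: emeasure_eq_ennreal_measure ennreal_enn2real_if ennreal_plus ennreal_mult less_top[symmetric])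
  finally have "ennreal (cmod (LINT x:A|lebesgue. g x))
      \<le> ennreal (t * measure lebesgue A + t powr (1 - p) * enn2real (Lp_integral p A g))" .
  moreover have "0 \<le> t * measure lebesgue A + t powr (1 - p) * enn2real (Lp_integral p A g)"
    using t by simp
  ultimately show "cmod (LINT x:A|lebesgue. g x) \<le> t * measure lebesgue A + t powr (1 - p) * enn2real (Lp_integral p A g)"
    using ennreal_le_iff by blast
qed

lemma mean_val_const:
  assumes "A \<in> sets lebesgue" "emeasure lebesgue A < \<infinity>" "0 < measure lebesgue A"
  shows "mean_val A (\<lambda>_. c) = c"
  using assms by (simp add: mean_val_def set_integral_const scaleR_conv_of_real less_top[symmetric])

lemma mean_val_add:
  assumes "set_integrable lebesgue A u" "set_integrable lebesgue A v"
  shows "mean_val A (\<lambda>x. u x + v x) = mean_val A u + mean_val A v"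
  using set_integral_add(2)[OF assms] by (simp add: mean_val_def distrib_left)

lemma mean_val_cmult: "mean_val A (\<lambda>x. c * u x) = c * mean_val A u"
  by (simp add: mean_val_def)

lemma mean_val_diff_const:
  assumes "A \<in> sets lebesgue" "emeasure lebesgue A < \<infinity>" "0 < measure lebesgue A"
    and "set_integrable lebesgue A u"
  shows "mean_val A (\<lambda>x. u x - c) = mean_val A u - c"
proof -
  have "set_integrable lebesgue A (\<lambda>_. c)"
    using assms(1,2) unfolding set_integrable_def
    by (intro integrable_scaleR_left integrable_real_indicator) (auto simp: less_top)
  then have "(LINT x:A|lebesgue. u x - c) = (LINT x:A|lebesgue. u x) - (LINT x:A|lebesgue. c)"
    using assms(4) by (rule set_integral_diff(2)[rotated])
  then show ?thesis
    using mean_val_const[OF assms(1-3), of c] assms(3)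
    by (simp add: mean_val_def right_diff_distrib field_simps)
qed

lemma mean_val_cong_AE:
  assumes "set_borel_measurable lebesgue \<Omega> u" "set_borel_measurable lebesgue \<Omega> v"
    and "AE x in lebesgue. x \<in> \<Omega> \<longrightarrow> u x = v x"
  shows "mean_val \<Omega> u = mean_val \<Omega> v"
proof -
  have "(LINT x:\<Omega>|lebesgue. u x) = (LINT x:\<Omega>|lebesgue. v x)"
    unfolding set_lebesgue_integral_def using assms(1,2) unfolding set_borel_measurable_def
    by (rule integral_cong_AE) (use assms(3) in \<open>auto elim!: eventually_mono simp: indicator_def\<close>)
  then show ?thesis
    by (simp add: mean_val_def)
qed

lemma norm_mean_val_powr_le:
  fixes g :: "'a::euclidean_space \<Rightarrow> complex"
  assumes p: "1 \<le> p" and A: "A \<in> sets lebesgue" "emeasure lebesgue A < \<infinity>" "0 < measure lebesgue A"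
    and g: "set_borel_measurable lebesgue A g" "Lp_integral p A g < \<infinity>"
  shows "cmod (mean_val A g) powr p * measure lebesgue A \<le> 2 powr p * enn2real (Lp_integral p A g)"
proof -
  define \<mu> where "\<mu> = measure lebesgue A"
  have \<mu>: "0 < \<mu>" using A(3) by (simp add: \<mu>_def)
  have "cmod (mean_val A g) = cmod (LINT x:A|lebesgue. g x) / \<mu>"
    using \<mu> by (simp add: mean_val_def norm_mult norm_divide \<mu>_def)
  then have "cmod (mean_val A g) powr p * \<mu> = cmod (LINT x:A|lebesgue. g x) powr p / \<mu> powr p * \<mu>"
    using \<mu> by (simp add: powr_divide)
  also have "\<dots> = cmod (LINT x:A|lebesgue. g x) powr p / \<mu> powr (p - 1)"
    using \<mu> by (simp add: powr_diff)
  also have "\<dots> \<le> 2 powr p * \<mu> powr (p - 1) * enn2real (Lp_integral p A g) / \<mu> powr (p - 1)"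
    using norm_set_integral_powr_le[OF p A g] \<mu> by (intro divide_right_mono) (simp_all add: \<mu>_def)
  also have "\<dots> = 2 powr p * enn2real (Lp_integral p A g)"
    using \<mu> by simp
  finally show ?thesis by (simp add: \<mu>_def)
qed

lemma norm_mean_val_le_Lp_norm:
  fixes u :: "'a::euclidean_space \<Rightarrow> complex"
  assumes p: "1 \<le> p" and A: "A \<in> sets lebesgue" "emeasure lebesgue A < \<infinity>" "0 < measure lebesgue A"
    and u: "set_borel_measurable lebesgue A u" "Lp_integral p A u < \<infinity>"
  shows "cmod (mean_val A u) \<le> (2 powr p / measure lebesgue A) powr (1 / p) * Lp_norm p A u"
proof -
  define \<mu> where "\<mu> = measure lebesgue A"
  have \<mu>: "0 < \<mu>" using A(3) by (simp add: \<mu>_def)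
  define I where "I = enn2real (Lp_integral p A u)"
  have bound: "cmod (mean_val A u) powr p \<le> 2 powr p / \<mu> * I"
    using norm_mean_val_powr_le[OF p A u] \<mu> by (simp add: \<mu>_def[symmetric] I_def field_simps)
  have "cmod (mean_val A u) = (cmod (mean_val A u) powr p) powr (1 / p)"
    using p by (simp add: powr_powr)
  also have "\<dots> \<le> (2 powr p / \<mu> * I) powr (1 / p)"
    using bound p by (intro powr_mono2) auto
  also have "\<dots> = (2 powr p / \<mu>) powr (1 / p) * I powr (1 / p)"
    by (rule powr_mult)
  finally show ?thesis
    by (simp add: Lp_norm_def I_def \<mu>_def)
qed

definition centered :: "'a::euclidean_space set \<Rightarrow> ('a \<Rightarrow> complex) \<Rightarrow> 'a \<Rightarrow> complex" where
  "centered A u = (\<lambda>x. u x - mean_val A u)"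

lemma Lp_integral_centered_le:
  fixes u :: "'a::euclidean_space \<Rightarrow> complex"
  assumes p: "1 \<le> p" and A: "A \<in> sets lebesgue" "emeasure lebesgue A < \<infinity>" "0 < measure lebesgue A"
    and u: "set_borel_measurable lebesgue A u" and fin: "Lp_integral p A (\<lambda>x. u x - c) < \<infinity>"
  shows "Lp_integral p A (centered A u) \<le> ennreal (2 powr p * (1 + 2 powr p)) * Lp_integral p A (\<lambda>x. u x - c)"
proof -
  define \<mu> where "\<mu> = measure lebesgue A"
  define I where "I = enn2real (Lp_integral p A (\<lambda>x. u x - c))"
  have \<mu>_pos: "0 < \<mu>"
    using A(3) by (simp add: \<mu>_def)
  have \<mu>_eq: "emeasure lebesgue A = ennreal \<mu>"
    using A(2) by (simp add: \<mu>_def emeasure_eq_ennreal_measure less_top)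
  have I_nonneg: "0 \<le> I"
    by (simp add: I_def)
  have I_eq: "Lp_integral p A (\<lambda>x. u x - c) = ennreal I"
    using fin by (simp add: I_def less_top)
  have g: "set_borel_measurable lebesgue A (\<lambda>x. u x - c)"
    using u A(1) by (rule set_borel_measurable_diff_const)
  have "Lp_integral p A (\<lambda>x. u x - 0) < \<infinity>"
    using p by (intro Lp_integral_diff_const_finite[OF _ A(1,2) u fin]) simp
  then have "set_integrable lebesgue A u"
    using p A u by (intro set_integrable_if_Lp_integral_finite) simp_all
  then have mean_g: "mean_val A (\<lambda>x. u x - c) = mean_val A u - c"
    by (rule mean_val_diff_const[OF A])
  have "cmod (c - mean_val A u) powr p * \<mu> \<le> 2 powr p * I"
    using norm_mean_val_powr_le[OF p A g fin]
    by (simp add: mean_g norm_minus_commute \<mu>_def I_def)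
  then have mean_bound: "ennreal (cmod (c - mean_val A u) powr p) * emeasure lebesgue A \<le> ennreal (2 powr p * I)"
    using \<mu>_pos by (simp add: \<mu>_eq ennreal_leI flip: ennreal_mult)
  have "Lp_integral p A (centered A u) \<le> ennreal (2 powr p)
      * (Lp_integral p A (\<lambda>x. u x - c) + ennreal (cmod (c - mean_val A u) powr p) * emeasure lebesgue A)"
    unfolding centered_def using p A(1) u by (intro Lp_integral_diff_const_le) simp_all
  also have "\<dots> \<le> ennreal (2 powr p) * (ennreal I + ennreal (2 powr p * I))"
    using mean_bound by (intro mult_left_mono add_mono) (simp_all add: I_eq)
  also have "\<dots> = ennreal (2 powr p * (1 + 2 powr p)) * ennreal I"
    using I_nonneg by (simp add: ennreal_plus[symmetric] ennreal_mult[symmetric] algebra_simps del: ennreal_plus)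
  finally show ?thesis
    by (simp add: I_eq)
qed

section \<open>The modular and the seminorm\<close>

lemma Fmod_cong_kernel_AE:
  fixes a a' :: "'a::euclidean_space \<Rightarrow> real"
  assumes "AE z in lebesgue. a z = a' z"
  shows "Fmod \<phi> a \<Omega> w = Fmod \<phi> a' \<Omega> w"
proof -
  have "AE z in (lebesgue :: ('a \<times> 'a) measure). a (fst z - snd z) = a' (fst z - snd z)"
    using assms by (rule AE_lebesgue_pair_diff)
  then show ?thesis
    unfolding Fmod_def by (intro nn_integral_cong_AE) (auto elim!: eventually_mono)
qed

lemma Fmod_integrand_measurable:
  fixes a :: "'a::euclidean_space \<Rightarrow> real"
  assumes "cond_C1 \<phi> \<Omega>" "w \<in> L1loc \<Omega>" and [measurable]: "a \<in> borel_measurable borel"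
  shows "(\<lambda>z. ennreal (\<phi> (cmod (w (fst z) - w (snd z))) (fst z) (snd z) * a (fst z - snd z))
      * indicator (\<Omega> \<times> \<Omega>) z) \<in> borel_measurable lebesgue"
proof -
  have [measurable]: "(\<lambda>z. indicator (\<Omega> \<times> \<Omega>) z *\<^sub>R \<phi> (cmod (w (fst z) - w (snd z))) (fst z) (snd z))
      \<in> borel_measurable lebesgue"
    using assms(1,2) by (simp add: cond_C1_def set_borel_measurable_def)
  have "(\<lambda>z::'a \<times> 'a. fst z - snd z) \<in> borel_measurable borel"
    by (intro borel_measurable_continuous_onI continuous_intros)
  then have "(\<lambda>z::'a \<times> 'a. a (fst z - snd z)) \<in> borel_measurable borel"
    using measurable_compose assms(3) by blast
  then have [measurable]: "(\<lambda>z::'a \<times> 'a. a (fst z - snd z)) \<in> borel_measurable lebesgue"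
    by (simp add: measurable_completion)
  have "(\<lambda>z. ennreal ((indicator (\<Omega> \<times> \<Omega>) z *\<^sub>R \<phi> (cmod (w (fst z) - w (snd z))) (fst z) (snd z))
      * a (fst z - snd z))) \<in> borel_measurable lebesgue"
    by measurable
  then show ?thesis
    by (rule measurable_cong[THEN iffD1, rotated]) (simp add: indicator_def)
qed

lemma Fmod_shift_invariant:
  fixes u v :: "'a::euclidean_space \<Rightarrow> complex"
  assumes "AE x in lebesgue. x \<in> \<Omega> \<longrightarrow> v x - u x = c"
  shows "Fmod \<phi> a \<Omega> v = Fmod \<phi> a \<Omega> u"
proof -
  have "AE z in (lebesgue :: ('a \<times> 'a) measure). fst z \<in> \<Omega> \<longrightarrow> v (fst z) - u (fst z) = c"
    "AE z in (lebesgue :: ('a \<times> 'a) measure). snd z \<in> \<Omega> \<longrightarrow> v (snd z) - u (snd z) = c"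
    using assms by (rule AE_lebesgue_pair_fst, rule AE_lebesgue_pair_snd)
  then have "AE z in lebesgue. z \<in> \<Omega> \<times> \<Omega> \<longrightarrow> v (fst z) - v (snd z) = u (fst z) - u (snd z)"
    by eventually_elim (auto simp: mem_Times_iff algebra_simps)
  then show ?thesis
    unfolding Fmod_def by (intro nn_integral_cong_AE) (auto simp: indicator_def elim!: eventually_mono)
qed

lemma pnorm_shift_invariant:
  assumes "AE x in lebesgue. x \<in> \<Omega> \<longrightarrow> v x - u x = c"
  shows "pnorm \<phi> a \<Omega> v = pnorm \<phi> a \<Omega> u"
proof -
  have "Fmod \<phi> a \<Omega> (\<lambda>x. v x / l) = Fmod \<phi> a \<Omega> (\<lambda>x. u x / l)" for l
    using assms by (intro Fmod_shift_invariant[where c = "c / l"])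
      (auto simp: diff_divide_distrib[symmetric] elim!: eventually_mono)
  then show ?thesis
    by (simp add: pnorm_def)
qed

lemma pnorm_nonneg: "0 \<le> pnorm \<phi> a \<Omega> u"
  unfolding pnorm_def by (rule Inf_greatest) auto

lemma pnorm_eq_Inf:
  assumes "\<exists>l>0. Fmod \<phi> a \<Omega> (\<lambda>x. u x / complex_of_real l) \<le> 1"
  shows "pnorm \<phi> a \<Omega> u = ereal (Inf {l. 0 < l \<and> Fmod \<phi> a \<Omega> (\<lambda>x. u x / complex_of_real l) \<le> 1})"
proof -
  define S where "S = {l. 0 < l \<and> Fmod \<phi> a \<Omega> (\<lambda>x. u x / complex_of_real l) \<le> 1}"
  have "S \<noteq> {}" "bdd_below S"
    using assms by (auto simp: S_def intro!: bdd_belowI[of _ 0])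
  then have "ereal (Inf S) = Inf (ereal ` S)"
    by (simp add: ereal_Inf' image_image)
  also have "ereal ` S = {ereal l | l. 0 < l \<and> Fmod \<phi> a \<Omega> (\<lambda>x. u x / complex_of_real l) \<le> 1}"
    by (auto simp: S_def)
  finally show ?thesis
    by (simp add: pnorm_def S_def)
qed

lemma pnorm_finite_iff:
  "pnorm \<phi> a \<Omega> u < \<infinity> \<longleftrightarrow> (\<exists>l>0. Fmod \<phi> a \<Omega> (\<lambda>x. u x / complex_of_real l) \<le> 1)"
proof
  assume fin: "pnorm \<phi> a \<Omega> u < \<infinity>"
  show "\<exists>l>0. Fmod \<phi> a \<Omega> (\<lambda>x. u x / complex_of_real l) \<le> 1"
  proof (rule ccontr)
    assume "\<not> ?thesis"
    then have "pnorm \<phi> a \<Omega> u = Inf {}"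
      unfolding pnorm_def by (intro arg_cong[where f = Inf]) auto
    with fin show False
      by (simp add: top_ereal_def)
  qed
qed (simp add: pnorm_eq_Inf)

lemma pnorm_AE_const:
  assumes "AE z in lebesgue. z \<in> \<Omega> \<times> \<Omega> \<longrightarrow> \<phi> 0 (fst z) (snd z) = 0"
    and "AE x in lebesgue. x \<in> \<Omega> \<longrightarrow> u x = c"
  shows "pnorm \<phi> a \<Omega> u = 0"
proof -
  have "Fmod \<phi> a \<Omega> (\<lambda>x. u x / complex_of_real l) = Fmod \<phi> a \<Omega> (\<lambda>x. c / complex_of_real l)" for l
    using assms(2) by (intro Fmod_shift_invariant[where c = 0]) (auto elim!: eventually_mono)
  also have "Fmod \<phi> a \<Omega> (\<lambda>x. c / complex_of_real l) = 0" for l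
    unfolding Fmod_def using assms(1)
    by (subst nn_integral_cong_AE[where v = "\<lambda>_. 0"]) (auto simp: indicator_def mem_Times_iff elim!: eventually_mono)
  finally have "{l. 0 < l \<and> Fmod \<phi> a \<Omega> (\<lambda>x. u x / complex_of_real l) \<le> 1} = {0<..}"
    by auto
  then show ?thesis
    by (subst pnorm_eq_Inf) (auto intro: exI[of _ 1])
qed

lemma le_mult_pnorm:
  assumes "pnorm \<phi> a \<Omega> u < \<infinity>" "0 \<le> C"
    and le: "\<And>l. 0 < l \<Longrightarrow> Fmod \<phi> a \<Omega> (\<lambda>x. u x / complex_of_real l) \<le> 1 \<Longrightarrow> X \<le> C * l"
  shows "X \<le> C * real_of_ereal (pnorm \<phi> a \<Omega> u)"
proof -
  define S where "S = {l. 0 < l \<and> Fmod \<phi> a \<Omega> (\<lambda>x. u x / complex_of_real l) \<le> 1}"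
  have ex: "\<exists>l>0. Fmod \<phi> a \<Omega> (\<lambda>x. u x / complex_of_real l) \<le> 1"
    using assms(1) pnorm_finite_iff by blast
  then have S: "S \<noteq> {}"
    by (auto simp: S_def)
  have pnorm: "real_of_ereal (pnorm \<phi> a \<Omega> u) = Inf S"
    using pnorm_eq_Inf[OF ex] by (simp add: S_def)
  show ?thesis
  proof (cases "C = 0")
    case True
    with S le show ?thesis by (auto simp: S_def)
  next
    case False
    then have "X / C \<le> Inf S"
      using assms(2) le by (intro cInf_greatest[OF S]) (auto simp: S_def field_simps)
    then show ?thesis
      using assms(2) False by (simp add: pnorm field_simps)
  qed
qed

section \<open>A bounded modular bounds the oscillation\<close>

lemma almost_increasing_powr_growth:
  assumes "almost_increasing \<beta> (\<lambda>t. g t / t powr p)" "0 < c" "inverse c \<le> g 1" "1 \<le> t"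
  shows "t powr p \<le> \<beta> * c * g t"
proof -
  have "\<forall>s t. 0 < s \<longrightarrow> s \<le> t \<longrightarrow> g s / s powr p \<le> \<beta> * (g t / t powr p)"
    using assms(1) by (simp add: almost_increasing_def)
  then have "g 1 / 1 powr p \<le> \<beta> * (g t / t powr p)"
    using assms(4) zero_less_one by blast
  then have "g 1 * t powr p \<le> \<beta> * g t"
    using assms(4) by (simp add: field_simps)
  moreover have "inverse c * t powr p \<le> g 1 * t powr p"
    using assms(3) by (rule mult_right_mono) simp
  ultimately have "inverse c * t powr p \<le> \<beta> * g t"
    by linarith
  then show ?thesis
    using assms(2) by (simp add: field_simps)
qed

lemma cond_C3_C4_growth:
  assumes "cond_C3 \<phi> \<Omega> pm pp \<beta>" "cond_C4 \<phi> \<Omega>"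
  obtains K where "0 < K" "AE z in lebesgue. z \<in> \<Omega> \<times> \<Omega> \<longrightarrow> (\<forall>t\<ge>1. t powr pm \<le> K * \<phi> t (fst z) (snd z))"
proof -
  obtain c where c: "0 < c" and C4: "AE z in lebesgue. z \<in> \<Omega> \<times> \<Omega> \<longrightarrow>
      inverse c \<le> \<phi> 1 (fst z) (snd z) \<and> \<phi> 1 (fst z) (snd z) \<le> c \<and>
      \<phi> 0 (fst z) (snd z) = 0 \<and> (\<forall>t>0. \<phi> t (fst z) (snd z) > 0)"
    using assms(2) unfolding cond_C4_def by blast
  have \<beta>: "1 \<le> \<beta>" and C3: "AE z in lebesgue. z \<in> \<Omega> \<times> \<Omega> \<longrightarrow>
      almost_increasing \<beta> (\<lambda>t. \<phi> t (fst z) (snd z) / t powr pm) \<and>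
      almost_decreasing \<beta> (\<lambda>t. \<phi> t (fst z) (snd z) / t powr pp)"
    using assms(1) unfolding cond_C3_def by blast+
  have "AE z in lebesgue. z \<in> \<Omega> \<times> \<Omega> \<longrightarrow> (\<forall>t\<ge>1. t powr pm \<le> \<beta> * c * \<phi> t (fst z) (snd z))"
    using C3 C4
  proof eventually_elim
    case (elim z)
    then show ?case
      using almost_increasing_powr_growth[OF _ c, where g = "\<lambda>t. \<phi> t (fst z) (snd z)"] by auto
  qed
  moreover have "0 < \<beta> * c"
    using \<beta> c by simp
  ultimately show ?thesis
    using that by blast
qed

lemma growth_near_diagonal:
  fixes a :: "'a::euclidean_space \<Rightarrow> real"
  assumes growth: "AE z in lebesgue. z \<in> \<Omega> \<times> \<Omega> \<longrightarrow> (\<forall>t\<ge>1. t powr p \<le> K * \<phi> t (fst z) (snd z))"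
    and "0 < c0" and a: "AE z in lebesgue. z \<in> ball 0 \<rho> \<longrightarrow> c0 \<le> a z"
  shows "AE z in lebesgue. z \<in> \<Omega> \<times> \<Omega> \<longrightarrow> dist (fst z) (snd z) < \<rho> \<longrightarrow>
      (\<forall>t\<ge>1. t powr p \<le> K / c0 * (\<phi> t (fst z) (snd z) * a (fst z - snd z)))"
  using growth AE_lebesgue_pair_diff[OF a]
proof eventually_elim
  case (elim z)
  show ?case
  proof (intro impI allI)
    fix t :: real
    assume "z \<in> \<Omega> \<times> \<Omega>" "dist (fst z) (snd z) < \<rho>" "1 \<le> t"
    then have bound: "t powr p \<le> K * \<phi> t (fst z) (snd z)" and "c0 \<le> a (fst z - snd z)"
      using elim by (auto simp: dist_norm norm_minus_commute)
    moreover have "0 < K * \<phi> t (fst z) (snd z)"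
      using bound \<open>1 \<le> t\<close> by (smt (verit) powr_gt_zero)
    ultimately have "K * \<phi> t (fst z) (snd z) * c0 \<le> K * \<phi> t (fst z) (snd z) * a (fst z - snd z)"
      by (intro mult_left_mono) simp_all
    then have "K * \<phi> t (fst z) (snd z) \<le> K / c0 * (\<phi> t (fst z) (snd z) * a (fst z - snd z))"
      using \<open>0 < c0\<close> by (simp add: field_simps)
    with bound show "t powr p \<le> K / c0 * (\<phi> t (fst z) (snd z) * a (fst z - snd z))"
      by linarith
  qed
qed

lemma local_energy_eq_nn_integral_lebesgue:
  fixes w f :: "'a::euclidean_space \<Rightarrow> complex"
  assumes [measurable]: "f \<in> borel_measurable borel" "\<Omega> \<in> sets borel"
    and f: "AE x in lebesgue. x \<in> \<Omega> \<longrightarrow> w x = f x"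
  shows "local_energy p \<rho> f \<Omega> = (\<integral>\<^sup>+z\<in>\<Omega> \<times> \<Omega>. indicator {z. dist (fst z) (snd z) < \<rho>} z
      * ennreal (cmod (w (fst z) - w (snd z)) powr p) \<partial>lebesgue)"
proof -
  define near where "near = {z::'a \<times> 'a. dist (fst z) (snd z) < \<rho>}"
  have "open near"
    unfolding near_def by (intro open_Collect_less continuous_intros)
  then have "near \<in> sets borel" by simp
  then have [measurable]: "near \<in> sets (borel \<Otimes>\<^sub>M borel)"
    unfolding borel_prod .
  have "(\<lambda>z::'a \<times> 'a. indicator near z * ennreal (cmod (f (fst z) - f (snd z)) powr p) * indicator (\<Omega> \<times> \<Omega>) z)
      \<in> borel_measurable (borel \<Otimes>\<^sub>M borel)"
    by measurable
  then have "(\<integral>\<^sup>+z\<in>\<Omega> \<times> \<Omega>. indicator near z * ennreal (cmod (f (fst z) - f (snd z)) powr p) \<partial>lebesgue)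
      = (\<integral>\<^sup>+x. \<integral>\<^sup>+y. indicator near (x, y) * ennreal (cmod (f x - f y) powr p) * indicator (\<Omega> \<times> \<Omega>) (x, y)
          \<partial>lborel \<partial>lborel)"
    by (simp add: nn_integral_lebesgue_pair borel_prod)
  also have "\<dots> = local_energy p \<rho> f \<Omega>"
    unfolding local_energy_def
    by (intro nn_integral_cong) (simp add: near_def indicator_def dist_commute)
  finally have "(\<integral>\<^sup>+z\<in>\<Omega> \<times> \<Omega>. indicator near z * ennreal (cmod (f (fst z) - f (snd z)) powr p) \<partial>lebesgue)
      = local_energy p \<rho> f \<Omega>" .
  moreover have "AE z in (lebesgue :: ('a \<times> 'a) measure). fst z \<in> \<Omega> \<longrightarrow> w (fst z) = f (fst z)"
    "AE z in (lebesgue :: ('a \<times> 'a) measure). snd z \<in> \<Omega> \<longrightarrow> w (snd z) = f (snd z)"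
    using f by (rule AE_lebesgue_pair_fst, rule AE_lebesgue_pair_snd)
  then have "AE z in lebesgue. indicator near z * ennreal (cmod (w (fst z) - w (snd z)) powr p) * indicator (\<Omega> \<times> \<Omega>) z
      = indicator near z * ennreal (cmod (f (fst z) - f (snd z)) powr p) * indicator (\<Omega> \<times> \<Omega>) z"
    by eventually_elim (auto simp: indicator_def mem_Times_iff)
  then have "(\<integral>\<^sup>+z\<in>\<Omega> \<times> \<Omega>. indicator near z * ennreal (cmod (w (fst z) - w (snd z)) powr p) \<partial>lebesgue)
      = (\<integral>\<^sup>+z\<in>\<Omega> \<times> \<Omega>. indicator near z * ennreal (cmod (f (fst z) - f (snd z)) powr p) \<partial>lebesgue)"
    by (rule nn_integral_cong_AE)
  ultimately show ?thesis
    by (simp add: near_def)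
qed

lemma ennreal_powr_le_one_plus:
  assumes "0 \<le> t" "0 \<le> p" "0 \<le> K" "1 < t \<Longrightarrow> t powr p \<le> K * q"
  shows "ennreal (t powr p) \<le> 1 + ennreal K * ennreal q"
proof (cases "t \<le> 1")
  case True
  then have "ennreal (t powr p) \<le> 1"
    using assms(1,2) by (simp add: powr_le1 ennreal_le_1)
  then show ?thesis
    by (simp add: add_increasing2)
next
  case False
  then have "ennreal (t powr p) \<le> ennreal K * ennreal q"
    using assms(3,4) by (simp add: ennreal_leI flip: ennreal_mult')
  then show ?thesis
    by (simp add: add_increasing)
qed

text \<open>Near the diagonal, \<open>|w x - w y|\<^sup>p\<close> is at most \<open>1\<close> where \<open>|w x - w y| \<le> 1\<close> and
  at most \<open>K\<close> times the integrand of \<open>Fmod\<close> elsewhere.\<close>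
lemma local_energy_le_Fmod:
  fixes a :: "'a::euclidean_space \<Rightarrow> real"
  assumes "open \<Omega>" "cond_C1 \<phi> \<Omega>" "w \<in> L1loc \<Omega>"
    and [measurable]: "f \<in> borel_measurable borel" "a \<in> borel_measurable borel"
    and f: "AE x in lebesgue. x \<in> \<Omega> \<longrightarrow> w x = f x"
    and "0 \<le> p" "0 \<le> K"
    and growth: "AE z in lebesgue. z \<in> \<Omega> \<times> \<Omega> \<longrightarrow> dist (fst z) (snd z) < \<rho> \<longrightarrow>
      (\<forall>t\<ge>1. t powr p \<le> K * (\<phi> t (fst z) (snd z) * a (fst z - snd z)))"
  shows "local_energy p \<rho> f \<Omega> \<le> emeasure lebesgue (\<Omega> \<times> \<Omega>) + ennreal K * Fmod \<phi> a \<Omega> w"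
proof -
  define F where "F z = ennreal (\<phi> (cmod (w (fst z) - w (snd z))) (fst z) (snd z) * a (fst z - snd z))" for z
  have [measurable]: "\<Omega> \<in> sets borel" "\<Omega> \<times> \<Omega> \<in> sets lebesgue"
      "(\<lambda>z. F z * indicator (\<Omega> \<times> \<Omega>) z) \<in> borel_measurable lebesgue"
    using assms(1) Fmod_integrand_measurable[OF assms(2,3,5)] by (simp_all add: F_def open_Times)
  have "local_energy p \<rho> f \<Omega> = (\<integral>\<^sup>+z\<in>\<Omega> \<times> \<Omega>. indicator {z. dist (fst z) (snd z) < \<rho>} z
      * ennreal (cmod (w (fst z) - w (snd z)) powr p) \<partial>lebesgue)"
    using f by (intro local_energy_eq_nn_integral_lebesgue) simp_all
  also have "\<dots> \<le> (\<integral>\<^sup>+z. indicator (\<Omega> \<times> \<Omega>) z + ennreal K * (F z * indicator (\<Omega> \<times> \<Omega>) z) \<partial>lebesgue)"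
  proof (rule nn_integral_mono_AE)
    show "AE z in lebesgue. indicator {z. dist (fst z) (snd z) < \<rho>} z * ennreal (cmod (w (fst z) - w (snd z)) powr p)
        * indicator (\<Omega> \<times> \<Omega>) z \<le> indicator (\<Omega> \<times> \<Omega>) z + ennreal K * (F z * indicator (\<Omega> \<times> \<Omega>) z)"
      using growth
    proof eventually_elim
      case (elim z)
      define t where "t = cmod (w (fst z) - w (snd z))"
      have "ennreal (t powr p) \<le> 1 + ennreal K * F z"
        if "z \<in> \<Omega> \<times> \<Omega>" "dist (fst z) (snd z) < \<rho>"
        unfolding F_def t_def using elim that assms(7,8) by (intro ennreal_powr_le_one_plus) simp_all
      then show ?case
        by (simp add: t_def indicator_def)
    qed
  qed
  also have "\<dots> = (\<integral>\<^sup>+z. indicator (\<Omega> \<times> \<Omega>) z \<partial>lebesgue) + ennreal K * (\<integral>\<^sup>+z. F z * indicator (\<Omega> \<times> \<Omega>) z \<partial>lebesgue)"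
    by (simp add: nn_integral_add nn_integral_cmult)
  also have "\<dots> = emeasure lebesgue (\<Omega> \<times> \<Omega>) + ennreal K * Fmod \<phi> a \<Omega> w"
    by (simp add: Fmod_def F_def)
  finally show ?thesis .
qed

lemma Lp_oscillation_le_pair_energy:
  fixes w f :: "'a::euclidean_space \<Rightarrow> complex"
  assumes [measurable]: "f \<in> borel_measurable borel" "\<Omega> \<in> sets borel"
    and "0 < emeasure lborel \<Omega>" "emeasure lborel \<Omega> < \<infinity>"
    and wf: "AE x in lebesgue. x \<in> \<Omega> \<longrightarrow> w x = f x"
    and "pair_energy p f \<Omega> \<Omega> \<le> T" "T < \<infinity>"
  shows "\<exists>c. Lp_integral p \<Omega> (\<lambda>x. w x - c) \<le> (T + 1) / emeasure lborel \<Omega>"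
proof -
  obtain x0 where x0: "(\<integral>\<^sup>+y. indicator \<Omega> y * ennreal (cmod (f x0 - f y) powr p) \<partial>lborel)
      \<le> (T + 1) / emeasure lborel \<Omega>"
    using exists_point_energy_le[OF assms(1-4,6,7)] by blast
  have "Lp_integral p \<Omega> (\<lambda>x. w x - f x0)
      = (\<integral>\<^sup>+y. indicator \<Omega> y * ennreal (cmod (f x0 - f y) powr p) \<partial>lebesgue)"
    unfolding Lp_integral_def using wf
    by (intro nn_integral_cong_AE) (auto simp: indicator_def norm_minus_commute elim!: eventually_mono)
  also have "\<dots> \<le> (T + 1) / emeasure lborel \<Omega>"
    using x0 by (simp add: nn_integral_completion)
  finally show ?thesis by blast
qed

definition oscillation_bound :: "real \<Rightarrow> (real \<Rightarrow> 'a \<Rightarrow> 'a \<Rightarrow> real) \<Rightarrow> ('a::euclidean_space \<Rightarrow> real)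
    \<Rightarrow> 'a set \<Rightarrow> ennreal \<Rightarrow> bool" where
  "oscillation_bound p \<phi> a \<Omega> K0 \<longleftrightarrow>
     (\<forall>w\<in>L1loc \<Omega>. Fmod \<phi> a \<Omega> w \<le> 1 \<longrightarrow> (\<exists>c. Lp_integral p \<Omega> (\<lambda>x. w x - c) \<le> K0))"

lemma Lp_oscillation_bound:
  fixes \<Omega> :: "'a::euclidean_space set" and a :: "'a \<Rightarrow> real"
  assumes \<Omega>: "open \<Omega>" "connected \<Omega>" "bounded \<Omega>" "\<Omega> \<noteq> {}"
    and a: "a \<in> borel_measurable lebesgue" and C1: "cond_C1 \<phi> \<Omega>"
    and "0 < \<rho>" "0 \<le> p" "0 \<le> K"
    and growth: "AE z in lebesgue. z \<in> \<Omega> \<times> \<Omega> \<longrightarrow> dist (fst z) (snd z) < \<rho> \<longrightarrow>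
      (\<forall>t\<ge>1. t powr p \<le> K * (\<phi> t (fst z) (snd z) * a (fst z - snd z)))"
  obtains K0 where "K0 < \<infinity>" "oscillation_bound p \<phi> a \<Omega> K0"
proof -
  obtain a' where a'[measurable]: "a' \<in> borel_measurable borel" and aa': "AE z in lebesgue. a z = a' z"
    using completion_ex_borel_measurable_real[of a lborel] a AE_completion by auto
  have growth': "AE z in lebesgue. z \<in> \<Omega> \<times> \<Omega> \<longrightarrow> dist (fst z) (snd z) < \<rho> \<longrightarrow>
      (\<forall>t\<ge>1. t powr p \<le> K * (\<phi> t (fst z) (snd z) * a' (fst z - snd z)))"
    using growth AE_lebesgue_pair_diff[OF aa'] by eventually_elim simp
  obtain Kc where Kc: "Kc < \<infinity>"
    "\<And>f. f \<in> borel_measurable borel \<Longrightarrow> pair_energy p f \<Omega> \<Omega> \<le> Kc * local_energy p \<rho> f \<Omega>"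
    using pair_energy_le_local_energy[OF \<Omega>(1-3) \<open>0 < \<rho>\<close> \<open>0 \<le> p\<close>] by blast
  define \<mu>2 where "\<mu>2 = emeasure (lebesgue :: ('a \<times> 'a) measure) (\<Omega> \<times> \<Omega>)"
  have "emeasure (lborel :: ('a \<times> 'a) measure) (\<Omega> \<times> \<Omega>) < \<infinity>"
    using \<Omega>(3) by (intro emeasure_bounded_finite bounded_Times)
  then have "\<mu>2 < \<infinity>"
    using \<Omega>(1) by (simp add: \<mu>2_def open_Times)
  define T where "T = Kc * (\<mu>2 + ennreal K)"
  have T: "T < \<infinity>"
    using Kc(1) \<open>\<mu>2 < \<infinity>\<close> by (simp add: T_def ennreal_mult_less_top)
  note \<mu> = open_bounded_emeasure[OF \<Omega>(1,3,4)]
  show ?thesis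
  proof (rule that)
    have "T + 1 < \<infinity>"
      using T by simp
    then show "(T + 1) / emeasure lborel \<Omega> < \<infinity>"
      using \<mu>(1) by (metis ennreal_divide_eq_top_iff less_top not_gr_zero infinity_ennreal_def)
  next
    show "oscillation_bound p \<phi> a \<Omega> ((T + 1) / emeasure lborel \<Omega>)"
      unfolding oscillation_bound_def
    proof (intro ballI impI)
      fix w assume w: "w \<in> L1loc \<Omega>" and Fw: "Fmod \<phi> a \<Omega> w \<le> 1"
      obtain f where f[measurable]: "f \<in> borel_measurable borel"
        and wf: "AE x in lebesgue. x \<in> \<Omega> \<longrightarrow> w x = f x"
        using set_borel_measurable_lebesgue_AE_eq_borel w by (auto simp: L1loc_def)
      have "local_energy p \<rho> f \<Omega> \<le> \<mu>2 + ennreal K * Fmod \<phi> a' \<Omega> w"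
        unfolding \<mu>2_def using \<Omega>(1) C1 w f a' wf assms(8,9) growth'
        by (rule local_energy_le_Fmod)
      also have "\<dots> \<le> \<mu>2 + ennreal K"
        using Fw Fmod_cong_kernel_AE[OF aa', of \<phi> \<Omega> w] by (simp add: add_left_mono mult_left_le)
      finally have "pair_energy p f \<Omega> \<Omega> \<le> T"
        unfolding T_def using Kc(2)[OF f] by (meson mult_left_mono order_trans zero_le)
      then show "\<exists>c. Lp_integral p \<Omega> (\<lambda>x. w x - c) \<le> (T + 1) / emeasure lborel \<Omega>"
        using \<Omega>(1) \<mu> wf T by (intro Lp_oscillation_le_pair_energy) simp_all
    qed
  qed
qed

section \<open>Function spaces and the Poincare inequality\<close>

lemma Lploc_if_Lp_integral_finite:
  assumes "set_borel_measurable lebesgue \<Omega> u" "Lp_integral p \<Omega> u < \<infinity>"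
  shows "u \<in> Lploc p \<Omega>"
proof -
  have "(\<integral>\<^sup>+x\<in>K. ennreal (cmod (u x) powr p) \<partial>lebesgue) \<le> Lp_integral p \<Omega> u" if "K \<subseteq> \<Omega>" for K
    unfolding Lp_integral_def using that by (intro nn_integral_mono) (auto simp: indicator_def)
  then show ?thesis
    using assms by (auto simp: Lploc_def intro: le_less_trans)
qed

lemma L1loc_if_Lp_integral_finite:
  fixes u :: "'a::euclidean_space \<Rightarrow> complex"
  assumes "1 \<le> p" "set_borel_measurable lebesgue \<Omega> u" "Lp_integral p \<Omega> u < \<infinity>"
  shows "u \<in> L1loc \<Omega>"
proof -
  have "set_integrable lebesgue K u" if K: "compact K" "K \<subseteq> \<Omega>" for K
  proof (rule set_integrable_if_Lp_integral_finite[OF assms(1)])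
    show K_sets: "K \<in> sets lebesgue"
      using K(1) by (simp add: compact_imp_closed)
    show "emeasure lebesgue K < \<infinity>"
      using emeasure_bounded_finite[OF compact_imp_bounded[OF K(1)]] K(1) by (simp add: compact_imp_closed)
    show "set_borel_measurable lebesgue K u"
      using assms(2) K_sets K(2) by (rule set_borel_measurable_subset)
    have "Lp_integral p K u \<le> Lp_integral p \<Omega> u"
      unfolding Lp_integral_def using K(2) by (intro nn_integral_mono) (auto simp: indicator_def)
    then show "Lp_integral p K u < \<infinity>"
      using assms(3) by (rule le_less_trans)
  qed
  then show ?thesis
    using assms(2) by (simp add: L1loc_def)
qed

lemma L1loc_divide:
  fixes u :: "'a::euclidean_space \<Rightarrow> complex"
  assumes "u \<in> L1loc \<Omega>"
  shows "(\<lambda>x. u x / k) \<in> L1loc \<Omega>"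
proof -
  have [measurable]: "(\<lambda>x. indicator \<Omega> x *\<^sub>R u x) \<in> borel_measurable lebesgue"
    using assms by (simp add: L1loc_def set_borel_measurable_def)
  have "(\<lambda>x. (indicator \<Omega> x *\<^sub>R u x) / k) \<in> borel_measurable lebesgue"
    by measurable
  then have "set_borel_measurable lebesgue \<Omega> (\<lambda>x. u x / k)"
    unfolding set_borel_measurable_def by (rule measurable_cong[THEN iffD1, rotated]) (simp add: indicator_def)
  moreover have "set_integrable lebesgue K (\<lambda>x. (1 / k) * u x)" if "compact K" "K \<subseteq> \<Omega>" for K
    using assms that by (simp add: L1loc_def)
  ultimately show ?thesis
    by (simp add: L1loc_def)
qed

lemma L1loc_diff_const:
  fixes u :: "'a::euclidean_space \<Rightarrow> complex"
  assumes "u \<in> L1loc \<Omega>" "\<Omega> \<in> sets lebesgue"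
  shows "(\<lambda>x. u x - c) \<in> L1loc \<Omega>"
proof -
  have "set_integrable lebesgue K (\<lambda>x. u x - c)" if K: "compact K" "K \<subseteq> \<Omega>" for K
  proof -
    have "set_integrable lebesgue K (\<lambda>_. c)"
      using K(1) emeasure_bounded_finite[OF compact_imp_bounded[OF K(1)]] unfolding set_integrable_def
      by (intro integrable_scaleR_left integrable_real_indicator) (simp_all add: compact_imp_closed)
    then show ?thesis
      using assms K by (intro set_integral_diff(1)) (simp_all add: L1loc_def)
  qed
  then show ?thesis
    using assms by (simp add: L1loc_def set_borel_measurable_diff_const)
qed

lemma Lspace_subset_Lambda_base: "1 \<le> p \<Longrightarrow> Lspace \<phi> a \<Omega> p \<subseteq> Lambda_base \<phi> a \<Omega>"
  by (auto simp: Lspace_def Lambda_base_def Lploc_def intro: L1loc_if_Lp_integral_finite)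

lemma Lspace_integrable:
  assumes "1 \<le> p" "\<Omega> \<in> sets lebesgue" "emeasure lebesgue \<Omega> < \<infinity>" "u \<in> Lspace \<phi> a \<Omega> p"
  shows "set_integrable lebesgue \<Omega> u"
  using assms set_integrable_if_Lp_integral_finite[OF assms(1-3)] by (auto simp: Lspace_def Lploc_def)

lemma const_in_Lspace:
  fixes \<Omega> :: "'a::euclidean_space set"
  assumes "open \<Omega>" "bounded \<Omega>"
    and "AE z in lebesgue. z \<in> \<Omega> \<times> \<Omega> \<longrightarrow> \<phi> 0 (fst z) (snd z) = 0"
  shows "(\<lambda>_. c) \<in> Lspace \<phi> a \<Omega> p"
proof -
  have \<Omega>: "\<Omega> \<in> sets lebesgue" "emeasure lebesgue \<Omega> < \<infinity>"
    using assms(1,2) emeasure_bounded_finite[OF assms(2)] by simp_all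
  then have "Lp_integral p \<Omega> (\<lambda>_. c) < \<infinity>"
    by (simp add: Lp_integral_const ennreal_mult_less_top)
  moreover have "pnorm \<phi> a \<Omega> (\<lambda>_. c) = 0"
    using assms(3) by (rule pnorm_AE_const[where c = c]) simp
  ultimately show ?thesis
    using Lploc_if_Lp_integral_finite[OF set_borel_measurable_const[OF \<Omega>(1)]] by (simp add: Lspace_def)
qed

lemma AE_zero_in_Lspace:
  assumes "set_borel_measurable lebesgue \<Omega> h" "AE x in lebesgue. x \<in> \<Omega> \<longrightarrow> h x = 0"
    and "AE z in lebesgue. z \<in> \<Omega> \<times> \<Omega> \<longrightarrow> \<phi> 0 (fst z) (snd z) = 0" "0 < p"
  shows "h \<in> Lspace \<phi> a \<Omega> p" "fnorm \<phi> a \<Omega> p h = 0"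
proof -
  have "Lp_integral p \<Omega> h = 0"
    unfolding Lp_integral_def using assms(2,4)
    by (subst nn_integral_cong_AE[where v = "\<lambda>_. 0"]) (auto simp: indicator_def elim!: eventually_mono)
  moreover have "pnorm \<phi> a \<Omega> h = 0"
    using assms(3,2) by (rule pnorm_AE_const)
  ultimately show "h \<in> Lspace \<phi> a \<Omega> p" "fnorm \<phi> a \<Omega> p h = 0"
    using Lploc_if_Lp_integral_finite[OF assms(1)] by (simp_all add: Lspace_def fnorm_def Lp_norm_def)
qed

lemma fnorm_nonneg: "0 \<le> fnorm \<phi> a \<Omega> p u"
  using pnorm_nonneg[of \<phi> a \<Omega> u] by (simp add: fnorm_def Lp_norm_def real_of_ereal_pos)

lemma oscillation_bound_scaled:
  fixes u :: "'a::euclidean_space \<Rightarrow> complex"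
  assumes "oscillation_bound p \<phi> a \<Omega> K0" "\<Omega> \<in> sets lebesgue" "u \<in> L1loc \<Omega>"
    and "0 < l" "Fmod \<phi> a \<Omega> (\<lambda>x. u x / complex_of_real l) \<le> 1"
  shows "\<exists>c. Lp_integral p \<Omega> (\<lambda>x. u x - c) \<le> ennreal (l powr p) * K0"
proof -
  define w where "w = (\<lambda>x. u x / complex_of_real l)"
  have w: "w \<in> L1loc \<Omega>"
    unfolding w_def using assms(3) by (rule L1loc_divide)
  moreover have "Fmod \<phi> a \<Omega> w \<le> 1"
    using assms(5) by (simp add: w_def)
  ultimately obtain c where c: "Lp_integral p \<Omega> (\<lambda>x. w x - c) \<le> K0"
    using assms(1) unfolding oscillation_bound_def by blast
  have "(\<lambda>x. u x - complex_of_real l * c) = (\<lambda>x. complex_of_real l * (w x - c))"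
    using assms(4) by (simp add: w_def right_diff_distrib)
  then have "Lp_integral p \<Omega> (\<lambda>x. u x - complex_of_real l * c) = ennreal (l powr p) * Lp_integral p \<Omega> (\<lambda>x. w x - c)"
    using w assms(2,4) by (simp add: Lp_integral_cmult set_borel_measurable_diff_const L1loc_def)
  also have "\<dots> \<le> ennreal (l powr p) * K0"
    using c by (rule mult_left_mono) simp
  finally show ?thesis by blast
qed

lemma Lambda_base_subset_Lspace:
  assumes "oscillation_bound p \<phi> a \<Omega> K0" "K0 < \<infinity>" "1 \<le> p"
    and \<Omega>: "\<Omega> \<in> sets lebesgue" "emeasure lebesgue \<Omega> < \<infinity>"
  shows "Lambda_base \<phi> a \<Omega> \<subseteq> Lspace \<phi> a \<Omega> p"
proof
  fix u assume "u \<in> Lambda_base \<phi> a \<Omega>"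
  then have u: "u \<in> L1loc \<Omega>" "pnorm \<phi> a \<Omega> u < \<infinity>"
    by (simp_all add: Lambda_base_def)
  then have um: "set_borel_measurable lebesgue \<Omega> u"
    by (simp add: L1loc_def)
  obtain l where "0 < l" "Fmod \<phi> a \<Omega> (\<lambda>x. u x / complex_of_real l) \<le> 1"
    using u(2) pnorm_finite_iff by blast
  then obtain c where "Lp_integral p \<Omega> (\<lambda>x. u x - c) \<le> ennreal (l powr p) * K0"
    using oscillation_bound_scaled[OF assms(1) \<Omega>(1) u(1)] by blast
  then have "Lp_integral p \<Omega> (\<lambda>x. u x - c) < \<infinity>"
    using assms(2) by (simp add: ennreal_mult_less_top le_less_trans)
  then have "Lp_integral p \<Omega> (\<lambda>x. u x - 0) < \<infinity>"
    using assms(3) by (intro Lp_integral_diff_const_finite[OF _ \<Omega> um \<open>Lp_integral p \<Omega> (\<lambda>x. u x - c) < \<infinity>\<close>]) simp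
  then show "u \<in> Lspace \<phi> a \<Omega> p"
    using u Lploc_if_Lp_integral_finite[OF um] by (simp add: Lspace_def)
qed

lemma Lp_norm_centered_le_pnorm:
  fixes u :: "'a::euclidean_space \<Rightarrow> complex"
  assumes osc: "oscillation_bound p \<phi> a \<Omega> K0" "K0 < \<infinity>" and p: "1 \<le> p"
    and \<Omega>: "\<Omega> \<in> sets lebesgue" "emeasure lebesgue \<Omega> < \<infinity>" "0 < measure lebesgue \<Omega>"
    and u: "u \<in> Lambda_base \<phi> a \<Omega>"
  shows "Lp_norm p \<Omega> (centered \<Omega> u)
    \<le> (2 powr p * (1 + 2 powr p) * enn2real K0) powr (1 / p) * real_of_ereal (pnorm \<phi> a \<Omega> u)"
proof (rule le_mult_pnorm)
  define C where "C = 2 powr p * (1 + 2 powr p)"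
  have C: "0 < C"
    by (simp add: C_def add_pos_pos)
  have uL: "u \<in> L1loc \<Omega>" and um: "set_borel_measurable lebesgue \<Omega> u"
    using u by (simp_all add: Lambda_base_def L1loc_def)
  show "pnorm \<phi> a \<Omega> u < \<infinity>"
    using u by (simp add: Lambda_base_def)
  fix l :: real
  assume l: "0 < l" "Fmod \<phi> a \<Omega> (\<lambda>x. u x / complex_of_real l) \<le> 1"
  obtain c where c: "Lp_integral p \<Omega> (\<lambda>x. u x - c) \<le> ennreal (l powr p) * K0"
    using oscillation_bound_scaled[OF osc(1) \<Omega>(1) uL l] by blast
  have fin: "ennreal (l powr p) * K0 < \<infinity>"
    using osc(2) by (simp add: ennreal_mult_less_top)
  have "Lp_integral p \<Omega> (centered \<Omega> u) \<le> ennreal C * (ennreal (l powr p) * K0)"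
    using Lp_integral_centered_le[OF p \<Omega> um le_less_trans[OF c fin]] c
    unfolding C_def by (meson mult_left_mono order_trans zero_le)
  also have "\<dots> = ennreal (C * enn2real K0 * l powr p)"
    using osc(2) C by (simp add: ennreal_mult ennreal_enn2real_if mult_ac less_top[symmetric])
  finally have "enn2real (Lp_integral p \<Omega> (centered \<Omega> u)) \<le> enn2real (ennreal (C * enn2real K0 * l powr p))"
    by (intro enn2real_mono) simp_all
  then have "enn2real (Lp_integral p \<Omega> (centered \<Omega> u)) \<le> C * enn2real K0 * l powr p"
    using C by simp
  then have "Lp_norm p \<Omega> (centered \<Omega> u) \<le> (C * enn2real K0 * l powr p) powr (1 / p)"
    unfolding Lp_norm_def using p by (intro powr_mono2) auto
  also have "\<dots> = (C * enn2real K0) powr (1 / p) * l"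
    using C l(1) p by (simp add: powr_mult powr_powr)
  finally show "Lp_norm p \<Omega> (centered \<Omega> u) \<le> (C * enn2real K0) powr (1 / p) * l" .
qed simp

section \<open>Duality\<close>

lemma centered_AE_eq_if_coset_eq:
  fixes u v :: "'a::euclidean_space \<Rightarrow> complex"
  assumes \<Omega>: "\<Omega> \<in> sets lebesgue" "emeasure lebesgue \<Omega> < \<infinity>" "0 < measure lebesgue \<Omega>"
    and u: "u \<in> L1loc \<Omega>" "set_integrable lebesgue \<Omega> u" and v: "v \<in> L1loc \<Omega>"
    and "coset_of \<Omega> u = coset_of \<Omega> v"
  shows "AE x in lebesgue. x \<in> \<Omega> \<longrightarrow> centered \<Omega> v x = centered \<Omega> u x"
proof -
  have "v \<in> coset_of \<Omega> v"
    using v by (auto simp: coset_of_def intro!: exI[of _ 0])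
  then have "v \<in> coset_of \<Omega> u"
    using assms(7) by simp
  then obtain c where c: "AE x in lebesgue. x \<in> \<Omega> \<longrightarrow> v x - u x = c"
    by (auto simp: coset_of_def)
  then have "AE x in lebesgue. x \<in> \<Omega> \<longrightarrow> v x = u x - (- c)"
    by (auto elim!: eventually_mono simp: algebra_simps)
  moreover have "set_borel_measurable lebesgue \<Omega> v" "set_borel_measurable lebesgue \<Omega> u"
    using u v by (simp_all add: L1loc_def)
  ultimately have "mean_val \<Omega> v = mean_val \<Omega> (\<lambda>x. u x - (- c))"
    using \<Omega>(1) by (intro mean_val_cong_AE set_borel_measurable_diff_const)
  also have "\<dots> = mean_val \<Omega> u + c"
    using mean_val_diff_const[OF \<Omega> u(2), of "- c"] by (simp del: minus_minus)
  finally have "mean_val \<Omega> v = mean_val \<Omega> u + c" .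
  then show ?thesis
    using c by (auto elim!: eventually_mono simp: centered_def algebra_simps)
qed

lemma dual_L_cong_AE:
  assumes \<psi>: "\<psi> \<in> dual_L \<phi> a \<Omega> p" and "0 < p"
    and \<phi>_zero: "AE z in lebesgue. z \<in> \<Omega> \<times> \<Omega> \<longrightarrow> \<phi> 0 (fst z) (snd z) = 0"
    and f: "f \<in> Lspace \<phi> a \<Omega> p" and g: "g \<in> Lspace \<phi> a \<Omega> p"
    and fg: "AE x in lebesgue. x \<in> \<Omega> \<longrightarrow> f x = g x"
  shows "\<psi> f = \<psi> g"
proof -
  define h where "h = (\<lambda>x. f x - g x)"
  have "set_borel_measurable lebesgue \<Omega> f" "set_borel_measurable lebesgue \<Omega> g"
    using f g by (simp_all add: Lspace_def Lploc_def)
  then have "set_borel_measurable lebesgue \<Omega> h"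
    unfolding set_borel_measurable_def h_def by (simp add: scaleR_diff_right borel_measurable_diff)
  moreover have "AE x in lebesgue. x \<in> \<Omega> \<longrightarrow> h x = 0"
    using fg by (auto elim!: eventually_mono simp: h_def)
  ultimately have h: "h \<in> Lspace \<phi> a \<Omega> p" "fnorm \<phi> a \<Omega> p h = 0"
    using \<phi>_zero \<open>0 < p\<close> by (simp_all add: AE_zero_in_Lspace)
  obtain C where "\<forall>u\<in>Lspace \<phi> a \<Omega> p. cmod (\<psi> u) \<le> C * fnorm \<phi> a \<Omega> p u"
    using \<psi> by (auto simp: dual_L_def)
  then have "cmod (\<psi> h) \<le> C * fnorm \<phi> a \<Omega> p h"
    using h(1) by blast
  then have "\<psi> h = 0"
    using h(2) by simp
  moreover have add: "\<psi> (\<lambda>x. u x + v x) = \<psi> u + \<psi> v"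
    if "u \<in> Lspace \<phi> a \<Omega> p" "v \<in> Lspace \<phi> a \<Omega> p" "(\<lambda>x. u x + v x) \<in> Lspace \<phi> a \<Omega> p" for u v
    using \<psi> that by (simp add: dual_L_def)
  have "(\<lambda>x. g x + h x) = f"
    by (simp add: h_def)
  then have "\<psi> f = \<psi> g + \<psi> h"
    using add[OF g h(1)] f by simp
  ultimately show ?thesis
    by simp
qed

lemma dual_L_of_dual_Lambda:
  fixes \<Omega> :: "'a::euclidean_space set"
  assumes \<Omega>: "open \<Omega>" "bounded \<Omega>" "\<Omega> \<noteq> {}" and p: "1 \<le> p"
    and \<psi>0: "\<psi>0 \<in> dual_Lambda \<phi> a \<Omega>"
  shows "(\<lambda>u. \<psi>0 (coset_of \<Omega> u) + k * mean_val \<Omega> u) \<in> dual_L \<phi> a \<Omega> p"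
proof -
  note \<Omega>' = open_bounded_measure[OF \<Omega>]
  have LB: "u \<in> Lambda_base \<phi> a \<Omega>" if "u \<in> Lspace \<phi> a \<Omega> p" for u
    using Lspace_subset_Lambda_base[OF p] that by blast
  have int: "set_integrable lebesgue \<Omega> u" if "u \<in> Lspace \<phi> a \<Omega> p" for u
    using Lspace_integrable[OF p \<Omega>'(1,2) that] .
  obtain C0 where C0: "\<And>u. u \<in> Lambda_base \<phi> a \<Omega> \<Longrightarrow> cmod (\<psi>0 (coset_of \<Omega> u)) \<le> C0 * real_of_ereal (pnorm \<phi> a \<Omega> u)"
    using \<psi>0 unfolding dual_Lambda_def by blast
  define Cm where "Cm = (2 powr p / measure lebesgue \<Omega>) powr (1 / p)"
  have bound: "cmod (\<psi>0 (coset_of \<Omega> u) + k * mean_val \<Omega> u) \<le> (max C0 0 + cmod k * Cm) * fnorm \<phi> a \<Omega> p u"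
    if u: "u \<in> Lspace \<phi> a \<Omega> p" for u
  proof -
    define pn where "pn = real_of_ereal (pnorm \<phi> a \<Omega> u)"
    define ln where "ln = Lp_norm p \<Omega> u"
    have pn: "0 \<le> pn" and ln: "0 \<le> ln" and Cm: "0 \<le> Cm"
      using pnorm_nonneg[of \<phi> a \<Omega> u] by (simp_all add: pn_def ln_def Lp_norm_def Cm_def real_of_ereal_pos)
    have "cmod (\<psi>0 (coset_of \<Omega> u)) \<le> max C0 0 * pn"
      using C0[OF LB[OF u]] pn by (simp add: pn_def) (meson max.cobounded1 mult_right_mono order_trans)
    moreover have "cmod (mean_val \<Omega> u) \<le> Cm * ln"
      using u norm_mean_val_le_Lp_norm[OF p \<Omega>'] by (simp add: Lspace_def Lploc_def Cm_def ln_def)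
    ultimately have "cmod (\<psi>0 (coset_of \<Omega> u) + k * mean_val \<Omega> u) \<le> max C0 0 * pn + cmod k * (Cm * ln)"
      by (smt (verit) mult_left_mono norm_ge_zero norm_mult norm_triangle_ineq)
    also have "\<dots> \<le> (max C0 0 + cmod k * Cm) * (pn + ln)"
      using pn ln Cm by (simp add: algebra_simps add_increasing)
    finally show ?thesis
      by (simp add: fnorm_def pn_def ln_def)
  qed
  show ?thesis
    unfolding dual_L_def
  proof (intro CollectI conjI allI impI exI ballI)
    fix u v assume u: "u \<in> Lspace \<phi> a \<Omega> p" and v: "v \<in> Lspace \<phi> a \<Omega> p"
      and uv: "(\<lambda>x. u x + v x) \<in> Lspace \<phi> a \<Omega> p"
    then show "\<psi>0 (coset_of \<Omega> (\<lambda>x. u x + v x)) + k * mean_val \<Omega> (\<lambda>x. u x + v x) =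
        \<psi>0 (coset_of \<Omega> u) + k * mean_val \<Omega> u + (\<psi>0 (coset_of \<Omega> v) + k * mean_val \<Omega> v)"
      using \<psi>0 LB mean_val_add[OF int[OF u] int[OF v]] by (simp add: dual_Lambda_def algebra_simps)
  next
    fix c u assume "u \<in> Lspace \<phi> a \<Omega> p" "(\<lambda>x. c * u x) \<in> Lspace \<phi> a \<Omega> p"
    then show "\<psi>0 (coset_of \<Omega> (\<lambda>x. c * u x)) + k * mean_val \<Omega> (\<lambda>x. c * u x)
        = c * (\<psi>0 (coset_of \<Omega> u) + k * mean_val \<Omega> u)"
      using \<psi>0 LB by (simp add: dual_Lambda_def mean_val_cmult algebra_simps)
  qed (rule bound)
qed

context
  fixes \<Omega> :: "'a::euclidean_space set" and \<phi> :: "real \<Rightarrow> 'a \<Rightarrow> 'a \<Rightarrow> real" and a :: "'a \<Rightarrow> real"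
    and p :: real and K0 :: ennreal
  assumes \<Omega>: "open \<Omega>" "bounded \<Omega>" "\<Omega> \<noteq> {}" and p: "1 \<le> p"
    and \<phi>_zero: "AE z in lebesgue. z \<in> \<Omega> \<times> \<Omega> \<longrightarrow> \<phi> 0 (fst z) (snd z) = 0"
    and osc: "oscillation_bound p \<phi> a \<Omega> K0" "K0 < \<infinity>"
begin

lemma Lspace_eq_Lambda_base: "Lspace \<phi> a \<Omega> p = Lambda_base \<phi> a \<Omega>"
  using Lspace_subset_Lambda_base[OF p] Lambda_base_subset_Lspace[OF osc p open_bounded_measure(1,2)[OF \<Omega>]]
  by blast

lemma centered_in_Lspace:
  assumes "u \<in> Lspace \<phi> a \<Omega> p"
  shows "centered \<Omega> u \<in> Lspace \<phi> a \<Omega> p"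
proof -
  have "u \<in> L1loc \<Omega>" "pnorm \<phi> a \<Omega> u < \<infinity>"
    using assms by (simp_all add: Lspace_eq_Lambda_base Lambda_base_def)
  moreover have "pnorm \<phi> a \<Omega> (centered \<Omega> u) = pnorm \<phi> a \<Omega> u"
    unfolding centered_def by (rule pnorm_shift_invariant[where c = "- mean_val \<Omega> u"]) simp
  ultimately show ?thesis
    using \<Omega>(1) by (simp add: Lspace_eq_Lambda_base Lambda_base_def centered_def L1loc_diff_const)
qed

lemma dual_L_eq_centered:
  assumes \<psi>: "\<psi> \<in> dual_L \<phi> a \<Omega> p" and u: "u \<in> Lspace \<phi> a \<Omega> p"
  shows "\<psi> u = \<psi> (centered \<Omega> u) + \<psi> (\<lambda>_. 1) * mean_val \<Omega> u"
proof -
  have const: "(\<lambda>_. c) \<in> Lspace \<phi> a \<Omega> p" for c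
    using \<Omega>(1,2) \<phi>_zero by (rule const_in_Lspace)
  have add: "\<psi> (\<lambda>x. f x + g x) = \<psi> f + \<psi> g"
    if "f \<in> Lspace \<phi> a \<Omega> p" "g \<in> Lspace \<phi> a \<Omega> p" "(\<lambda>x. f x + g x) \<in> Lspace \<phi> a \<Omega> p" for f g
    using \<psi> that by (simp add: dual_L_def)
  have scal: "\<psi> (\<lambda>x. c * f x) = c * \<psi> f"
    if "f \<in> Lspace \<phi> a \<Omega> p" "(\<lambda>x. c * f x) \<in> Lspace \<phi> a \<Omega> p" for c f
    using \<psi> that by (simp add: dual_L_def)
  have "(\<lambda>x. centered \<Omega> u x + mean_val \<Omega> u) = u"
    by (simp add: centered_def)
  then have "\<psi> u = \<psi> (centered \<Omega> u) + \<psi> (\<lambda>_. mean_val \<Omega> u)"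
    using add[OF centered_in_Lspace[OF u] const, of "mean_val \<Omega> u"] u by simp
  also have "\<psi> (\<lambda>_. mean_val \<Omega> u) = mean_val \<Omega> u * \<psi> (\<lambda>_. 1)"
    using scal[OF const const, of "mean_val \<Omega> u" 1] by simp
  finally show ?thesis
    by (simp add: mult.commute)
qed

lemma dual_L_centered_coset_eq:
  assumes \<psi>: "\<psi> \<in> dual_L \<phi> a \<Omega> p" and u: "u \<in> Lspace \<phi> a \<Omega> p" and v: "v \<in> Lspace \<phi> a \<Omega> p"
    and "coset_of \<Omega> u = coset_of \<Omega> v"
  shows "\<psi> (centered \<Omega> v) = \<psi> (centered \<Omega> u)"
proof (rule dual_L_cong_AE[OF \<psi> _ \<phi>_zero centered_in_Lspace[OF v] centered_in_Lspace[OF u]])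
  show "0 < p" using p by simp
  note \<Omega>' = open_bounded_measure[OF \<Omega>]
  show "AE x in lebesgue. x \<in> \<Omega> \<longrightarrow> centered \<Omega> v x = centered \<Omega> u x"
  proof (rule centered_AE_eq_if_coset_eq[OF \<Omega>' _ Lspace_integrable[OF p \<Omega>'(1,2) u] _ assms(4)])
    show "u \<in> L1loc \<Omega>" "v \<in> L1loc \<Omega>"
      using u v by (simp_all add: Lspace_eq_Lambda_base Lambda_base_def)
  qed
qed

text \<open>By the Poincare inequality, the \<open>L\<^sub>p\<close> part of the norm of a centred function is controlled
  by its \<open>pnorm\<close>, which is all that the norm of \<open>\<Lambda>(\<Omega>)\<close> sees.\<close>
lemma norm_dual_L_centered_le:
  assumes \<psi>: "\<psi> \<in> dual_L \<phi> a \<Omega> p"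
  obtains C where "\<And>u. u \<in> Lambda_base \<phi> a \<Omega> \<Longrightarrow> cmod (\<psi> (centered \<Omega> u)) \<le> C * real_of_ereal (pnorm \<phi> a \<Omega> u)"
proof -
  obtain C where C: "\<And>u. u \<in> Lspace \<phi> a \<Omega> p \<Longrightarrow> cmod (\<psi> u) \<le> C * fnorm \<phi> a \<Omega> p u"
    using \<psi> unfolding dual_L_def by blast
  define CP where "CP = (2 powr p * (1 + 2 powr p) * enn2real K0) powr (1 / p)"
  show ?thesis
  proof (rule that)
    fix u assume u: "u \<in> Lambda_base \<phi> a \<Omega>"
    define pn where "pn = real_of_ereal (pnorm \<phi> a \<Omega> u)"
    have "pnorm \<phi> a \<Omega> (centered \<Omega> u) = pnorm \<phi> a \<Omega> u"
      unfolding centered_def by (rule pnorm_shift_invariant[where c = "- mean_val \<Omega> u"]) simp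
    then have fnorm_le: "fnorm \<phi> a \<Omega> p (centered \<Omega> u) \<le> pn + CP * pn"
      using Lp_norm_centered_le_pnorm[OF osc p open_bounded_measure[OF \<Omega>] u]
      by (simp add: fnorm_def pn_def CP_def)
    have "centered \<Omega> u \<in> Lspace \<phi> a \<Omega> p"
      using u by (intro centered_in_Lspace) (simp add: Lspace_eq_Lambda_base)
    then have "cmod (\<psi> (centered \<Omega> u)) \<le> C * fnorm \<phi> a \<Omega> p (centered \<Omega> u)"
      by (rule C)
    also have "\<dots> \<le> max C 0 * fnorm \<phi> a \<Omega> p (centered \<Omega> u)"
      by (intro mult_right_mono fnorm_nonneg) simp
    also have "\<dots> \<le> max C 0 * (pn + CP * pn)"
      using fnorm_le by (intro mult_left_mono) simp_all
    also have "\<dots> = (max C 0 * (1 + CP)) * pn"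
      by (simp add: algebra_simps)
    finally show "cmod (\<psi> (centered \<Omega> u)) \<le> (max C 0 * (1 + CP)) * real_of_ereal (pnorm \<phi> a \<Omega> u)"
      by (simp add: pn_def)
  qed
qed

lemma dual_Lambda_if_centered:
  assumes \<psi>: "\<psi> \<in> dual_L \<phi> a \<Omega> p"
    and \<psi>0: "\<And>u. u \<in> Lambda_base \<phi> a \<Omega> \<Longrightarrow> \<psi>0 (coset_of \<Omega> u) = \<psi> (centered \<Omega> u)"
  shows "\<psi>0 \<in> dual_Lambda \<phi> a \<Omega>"
proof -
  have L: "u \<in> Lspace \<phi> a \<Omega> p \<longleftrightarrow> u \<in> Lambda_base \<phi> a \<Omega>" for u
    by (simp add: Lspace_eq_Lambda_base)
  have int: "set_integrable lebesgue \<Omega> u" if "u \<in> Lambda_base \<phi> a \<Omega>" for u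
    using Lspace_integrable[OF p open_bounded_measure(1,2)[OF \<Omega>], of u \<phi> a] that by (simp add: L)
  have add: "\<psi> (\<lambda>x. u x + v x) = \<psi> u + \<psi> v"
    if "u \<in> Lspace \<phi> a \<Omega> p" "v \<in> Lspace \<phi> a \<Omega> p" "(\<lambda>x. u x + v x) \<in> Lspace \<phi> a \<Omega> p" for u v
    using \<psi> that by (simp add: dual_L_def)
  have scal: "\<psi> (\<lambda>x. c * u x) = c * \<psi> u"
    if "u \<in> Lspace \<phi> a \<Omega> p" "(\<lambda>x. c * u x) \<in> Lspace \<phi> a \<Omega> p" for c u
    using \<psi> that by (simp add: dual_L_def)
  obtain C where C: "\<And>u. u \<in> Lambda_base \<phi> a \<Omega> \<Longrightarrow> cmod (\<psi> (centered \<Omega> u)) \<le> C * real_of_ereal (pnorm \<phi> a \<Omega> u)"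
    using norm_dual_L_centered_le[OF \<psi>] by blast
  show ?thesis
    unfolding dual_Lambda_def
  proof (intro CollectI conjI allI impI exI ballI)
    fix u v assume u: "u \<in> Lambda_base \<phi> a \<Omega>" and v: "v \<in> Lambda_base \<phi> a \<Omega>"
      and uv: "(\<lambda>x. u x + v x) \<in> Lambda_base \<phi> a \<Omega>"
    have eq: "centered \<Omega> (\<lambda>x. u x + v x) = (\<lambda>x. centered \<Omega> u x + centered \<Omega> v x)"
      using mean_val_add[OF int[OF u] int[OF v]] by (simp add: centered_def algebra_simps)
    have "centered \<Omega> u \<in> Lspace \<phi> a \<Omega> p" "centered \<Omega> v \<in> Lspace \<phi> a \<Omega> p"
      "(\<lambda>x. centered \<Omega> u x + centered \<Omega> v x) \<in> Lspace \<phi> a \<Omega> p"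
      using centered_in_Lspace u v uv by (simp_all flip: eq add: L)
    then show "\<psi>0 (coset_of \<Omega> (\<lambda>x. u x + v x)) = \<psi>0 (coset_of \<Omega> u) + \<psi>0 (coset_of \<Omega> v)"
      using u v uv by (simp add: \<psi>0 eq add)
  next
    fix c u assume u: "u \<in> Lambda_base \<phi> a \<Omega>" and cu: "(\<lambda>x. c * u x) \<in> Lambda_base \<phi> a \<Omega>"
    have eq: "centered \<Omega> (\<lambda>x. c * u x) = (\<lambda>x. c * centered \<Omega> u x)"
      by (simp add: centered_def mean_val_cmult algebra_simps)
    have "centered \<Omega> u \<in> Lspace \<phi> a \<Omega> p" "(\<lambda>x. c * centered \<Omega> u x) \<in> Lspace \<phi> a \<Omega> p"
      using centered_in_Lspace u cu by (simp_all flip: eq add: L)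
    then show "\<psi>0 (coset_of \<Omega> (\<lambda>x. c * u x)) = c * \<psi>0 (coset_of \<Omega> u)"
      using u cu by (simp add: \<psi>0 eq scal)
  next
    fix u assume "u \<in> Lambda_base \<phi> a \<Omega>"
    then show "cmod (\<psi>0 (coset_of \<Omega> u)) \<le> C * real_of_ereal (pnorm \<phi> a \<Omega> u)"
      by (simp add: \<psi>0 C)
  qed
qed

lemma dual_L_decomposition:
  assumes \<psi>: "\<psi> \<in> dual_L \<phi> a \<Omega> p"
  shows "\<exists>\<psi>0\<in>dual_Lambda \<phi> a \<Omega>. \<exists>k. \<forall>u\<in>Lspace \<phi> a \<Omega> p. \<psi> u = \<psi>0 (coset_of \<Omega> u) + k * mean_val \<Omega> u"
proof -
  define rep where "rep U = (SOME v. v \<in> Lambda_base \<phi> a \<Omega> \<and> coset_of \<Omega> v = U)" for U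
  define \<psi>0 where "\<psi>0 U = \<psi> (centered \<Omega> (rep U))" for U
  have \<psi>0: "\<psi>0 (coset_of \<Omega> u) = \<psi> (centered \<Omega> u)" if u: "u \<in> Lambda_base \<phi> a \<Omega>" for u
  proof -
    have "rep (coset_of \<Omega> u) \<in> Lambda_base \<phi> a \<Omega> \<and> coset_of \<Omega> (rep (coset_of \<Omega> u)) = coset_of \<Omega> u"
      unfolding rep_def by (rule someI[where x = u]) (simp add: u)
    then show ?thesis
      unfolding \<psi>0_def using u
      by (intro dual_L_centered_coset_eq[OF \<psi>]) (simp_all add: Lspace_eq_Lambda_base)
  qed
  then have "\<psi>0 \<in> dual_Lambda \<phi> a \<Omega>"
    by (rule dual_Lambda_if_centered[OF \<psi>])
  moreover have "\<psi> u = \<psi>0 (coset_of \<Omega> u) + \<psi> (\<lambda>_. 1) * mean_val \<Omega> u" if "u \<in> Lspace \<phi> a \<Omega> p" for u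
    using dual_L_eq_centered[OF \<psi> that] \<psi>0 that by (simp add: Lspace_eq_Lambda_base)
  ultimately show ?thesis
    by blast
qed

end

theorem theorem2p8:
  fixes \<Omega> :: "'a::euclidean_space set"
    and a :: "'a \<Rightarrow> real"
    and \<phi> :: "real \<Rightarrow> 'a \<Rightarrow> 'a \<Rightarrow> real"
    and pm pp \<beta> :: real
  assumes a_L1: "integrable lebesgue a"
    and a_nonneg: "AE z in lebesgue. a z \<ge> 0"
    and a_ball: "\<exists>\<rho>>0. \<exists>c0>0. AE z in lebesgue. z \<in> ball 0 \<rho> \<longrightarrow> a z \<ge> c0"
    and \<phi>_nonneg: "\<forall>t\<ge>0. \<forall>x\<in>\<Omega>. \<forall>y\<in>\<Omega>. \<phi> t x y \<ge> 0"
    and C1: "cond_C1 \<phi> \<Omega>"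
    and C2: "cond_C2 \<phi> \<Omega>"
    and C3: "cond_C3 \<phi> \<Omega> pm pp \<beta>"
    and C4: "cond_C4 \<phi> \<Omega>"
    and domain: "open \<Omega>" "connected \<Omega>" "\<Omega> \<noteq> {}"
    and bdd: "bounded \<Omega>"
    and lip: "lipschitz_boundary \<Omega>"
  shows "(\<forall>\<psi> \<in> dual_L \<phi> a \<Omega> pm. \<exists>\<psi>0 \<in> dual_Lambda \<phi> a \<Omega>. \<exists>k::complex.
            \<forall>u \<in> Lspace \<phi> a \<Omega> pm. \<psi> u = \<psi>0 (coset_of \<Omega> u) + k * mean_val \<Omega> u)
       \<and> (\<forall>\<psi>0 \<in> dual_Lambda \<phi> a \<Omega>. \<forall>k::complex.
            (\<lambda>u. \<psi>0 (coset_of \<Omega> u) + k * mean_val \<Omega> u) \<in> dual_L \<phi> a \<Omega> pm)"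
proof -
  have p: "1 \<le> pm"
    using C3 by (simp add: cond_C3_def)
  obtain K where "0 < K" and growth: "AE z in lebesgue. z \<in> \<Omega> \<times> \<Omega> \<longrightarrow> (\<forall>t\<ge>1. t powr pm \<le> K * \<phi> t (fst z) (snd z))"
    using C3 C4 by (rule cond_C3_C4_growth)
  obtain \<rho> c0 where "0 < \<rho>" "0 < c0" and a_ge: "AE z in lebesgue. z \<in> ball 0 \<rho> \<longrightarrow> c0 \<le> a z"
    using a_ball by blast
  obtain K0 where osc: "K0 < \<infinity>" "oscillation_bound pm \<phi> a \<Omega> K0"
    using Lp_oscillation_bound[OF domain(1,2) bdd domain(3) borel_measurable_integrable[OF a_L1] C1 \<open>0 < \<rho>\<close> _ _
        growth_near_diagonal[OF growth \<open>0 < c0\<close> a_ge]] p \<open>0 < K\<close> \<open>0 < c0\<close>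
    by auto
  have \<phi>_zero: "AE z in lebesgue. z \<in> \<Omega> \<times> \<Omega> \<longrightarrow> \<phi> 0 (fst z) (snd z) = 0"
    using C4 unfolding cond_C4_def by (auto elim!: eventually_mono)
  show ?thesis
    using dual_L_decomposition[OF domain(1) bdd domain(3) p \<phi>_zero osc(2,1)]
      dual_L_of_dual_Lambda[OF domain(1) bdd domain(3) p] by blast
qed

end
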